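(* Let $\gamma_1,\gamma_2\in\Psi^+$ be orthogonal roots such that $\{\gamma_1,\gamma_2\}$ is contained in some admissible subset of $\Psi^+$. Then $e_{\gamma_1}e_{\gamma_2}=e_{\gamma_2}e_{\gamma_1}$ in $\mathrm{Br}(\mathrm{F}_4)$.
   Context: $\mathrm{Br}(\mathrm{F}_4)$ is the unital associative $\mathbb Z[\delta^{\pm1}]$-algebra ($\delta$ an indeterminate) generated by $r_1,\dots,r_4,e_1,\dots,e_4$ subject to: $r_i^2=1$, $r_ie_i=e_ir_i=e_i$ for all $i$; $e_i^2=\delta e_i$ for $i\in\{3,4\}$; $e_i^2=\delta^2e_i$ for $i\in\{1,2\}$; for $\{i,j\}\in\{\{1,3\},\{1,4\},\{2,4\}\}$: $r_ir_j=r_jr_i$, $e_ir_j=r_je_i$, $e_ie_j=e_je_i$; for $(i,j)\in\{(1,2),(2,1),(3,4),(4,3)\}$: $r_ir_jr_i=r_jr_ir_j$, $r_jr_ie_j=e_ie_j$, $r_ie_jr_i=r_je_ir_j$; and $r_2r_3r_2r_3=r_3r_2r_3r_2$, $r_2r_3e_2=r_3e_2$, $r_2e_3r_2e_3=e_3e_2e_3$, $(r_2r_3r_2)e_3=e_3(r_2r_3r_2)$, $e_2r_3e_2=\delta e_2$, $e_2e_3e_2=\delta e_2$, $e_2r_3r_2=e_2r_3$, $e_2e_3r_2=e_2e_3$. Roots: $\epsilon_1,\dots,\epsilon_4$ standard basis of $\mathbb R^4$; $\beta_1=\frac12(\epsilon_1-\epsilon_2-\epsilon_3-\epsilon_4)$,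 $\beta_2=\epsilon_2$, $\beta_3=\epsilon_3-\epsilon_2$, $\beta_4=\epsilon_4-\epsilon_3$; $\Psi=\{\pm\epsilon_i\}\cup\{\pm\epsilon_i\pm\epsilon_j:i<j\}\cup\{\frac12(\pm\epsilon_1\pm\epsilon_2\pm\epsilon_3\pm\epsilon_4)\}$ with positive roots $\Psi^+$ = roots that are nonnegative combinations of the $\beta_i$; a root and its negative are identified when naming positive roots. $W=W(\mathrm{F}_4)$ is generated by $s_i=s_{\beta_i}$, identified with its image in $\mathrm{Br}(\mathrm{F}_4)$ via $s_i\mapsto r_i$; $W$ acts on $\Psi^+$ by $w\cdot\beta=$ the positive one of $\pm w\beta$. For $\beta\in\Psi^+$, $e_\beta:=we_iw^{-1}$ for any $w\in W$, $i\in\{1,\dots,4\}$ with $w\beta_i=\beta$ (this is well defined). Admissible sets: let $\Phi$ be the $\mathrm{E}_6$ root system in a Euclidean space $V$ with simple roots $\alpha_1,\dots,\alpha_6$ of squared length $2$, $(\alpha_i,\alpha_j)=-1$ for $\{i,j\}\in\{\{1,3\},\{3,4\},\{4,5\},\{5,6\},\{2,4\}\}$ and $0$ for other $i\ne j$, positive roots $\Phi^+$. $B\subseteq\Phi^+$ is admissible if its elements are mutually orthogonal and whenever $\gamma_1,\gamma_2,\gamma_3\in B$ are distinct and $\gamma\in\Phi$ has $(\gamma,\gamma_k)\in\{\pm1\}$ ($k=1,2,3$), the positive one of $\pm(2\gamma-\sum_k(\gamma,\gamma_k)\gamma_k)$ lies in $B$. With $\mathfrak p:V\to\mathbb R^4$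 linear, $\mathfrak p(\alpha_1)=\mathfrak p(\alpha_6)=\beta_1$, $\mathfrak p(\alpha_3)=\mathfrak p(\alpha_5)=\beta_2$, $\mathfrak p(\alpha_4)=\beta_3$, $\mathfrak p(\alpha_2)=\beta_4$, a set $X\subseteq\Psi^+$ of mutually orthogonal roots is admissible if $\mathfrak p^{-1}(X)\cap\Phi^+$ is admissible. *)

theory Defs
  imports "HOL-Analysis.Analysis"
begin

definition beta :: "nat \<Rightarrow> real^4" where
  "beta i = (if i = 1 then vector [1/2, -1/2, -1/2, -1/2]
             else if i = 2 then vector [0, 1, 0, 0]
             else if i = 3 then vector [0, -1, 1, 0]
             else vector [0, 0, -1, 1])"

definition PsiF4 :: "(real^4) set" where
  "PsiF4 = {v. (\<exists>i. v = axis i 1 \<or> v = - axis i 1)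
             \<or> (\<exists>i j a b. i \<noteq> j \<and> a \<in> {-1,1} \<and> b \<in> {-1,1} \<and> v = a *\<^sub>R axis i 1 + b *\<^sub>R axis j 1)
             \<or> (\<forall>i. v $ i \<in> {-1/2, 1/2})}"

definition PsiF4_pos :: "(real^4) set" where
  "PsiF4_pos = {v \<in> PsiF4. \<exists>c :: nat \<Rightarrow> real. (\<forall>i. c i \<ge> 0) \<and> v = (\<Sum>i\<in>{1..4}. c i *\<^sub>R beta i)}"

definition refl4 :: "real^4 \<Rightarrow> real^4 \<Rightarrow> real^4" where
  "refl4 b v = v - (2 * (v \<bullet> b) / (b \<bullet> b)) *\<^sub>R b"

text \<open>the Weyl group element s_{w_1} s_{w_2} ... s_{w_n} given by a word (list of indices in 1..4)\<close>
definition wact :: "nat list \<Rightarrow> real^4 \<Rightarrow> real^4" where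
  "wact w v = foldr (\<lambda>i x. refl4 (beta i) x) w v"

definition cartanE6 :: "nat \<Rightarrow> nat \<Rightarrow> int" where
  "cartanE6 i j = (if i = j then 2
     else if {i,j} \<in> {{1,3},{3,4},{4,5},{5,6},{2,4}} then -1 else 0)"

text \<open>elements of V are represented by their coordinates w.r.t. alpha_1..alpha_6\<close>
definition formE6 :: "(nat \<Rightarrow> int) \<Rightarrow> (nat \<Rightarrow> int) \<Rightarrow> int" where
  "formE6 x y = (\<Sum>i\<in>{1..6}. \<Sum>j\<in>{1..6}. x i * cartanE6 i j * y j)"

definition alphaE6 :: "nat \<Rightarrow> (nat \<Rightarrow> int)" where
  "alphaE6 i = (\<lambda>n. if n = i then 1 else 0)"

definition reflE6 :: "nat \<Rightarrow> (nat \<Rightarrow> int) \<Rightarrow> (nat \<Rightarrow> int)" where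
  "reflE6 i x = (\<lambda>n. x n - formE6 x (alphaE6 i) * alphaE6 i n)"

inductive_set PhiE6 :: "(nat \<Rightarrow> int) set" where
  simple: "i \<in> {1..6} \<Longrightarrow> alphaE6 i \<in> PhiE6"
| refl: "x \<in> PhiE6 \<Longrightarrow> i \<in> {1..6} \<Longrightarrow> reflE6 i x \<in> PhiE6"

definition PhiE6_pos :: "(nat \<Rightarrow> int) set" where
  "PhiE6_pos = {x \<in> PhiE6. \<forall>n. x n \<ge> 0}"

definition posE6 :: "(nat \<Rightarrow> int) \<Rightarrow> (nat \<Rightarrow> int)" where
  "posE6 x = (if x \<in> PhiE6_pos then x else (\<lambda>n. - x n))"

definition admissibleE6 :: "(nat \<Rightarrow> int) set \<Rightarrow> bool" where
  "admissibleE6 B \<longleftrightarrow> B \<subseteq> PhiE6_pos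
     \<and> (\<forall>x\<in>B. \<forall>y\<in>B. x \<noteq> y \<longrightarrow> formE6 x y = 0)
     \<and> (\<forall>g1\<in>B. \<forall>g2\<in>B. \<forall>g3\<in>B. \<forall>g\<in>PhiE6.
          g1 \<noteq> g2 \<and> g1 \<noteq> g3 \<and> g2 \<noteq> g3
          \<and> formE6 g g1 \<in> {-1,1} \<and> formE6 g g2 \<in> {-1,1} \<and> formE6 g g3 \<in> {-1,1}
          \<longrightarrow> posE6 (\<lambda>n. 2 * g n - formE6 g g1 * g1 n - formE6 g g2 * g2 n - formE6 g g3 * g3 n) \<in> B)"

definition palpha :: "nat \<Rightarrow> real^4" where
  "palpha i = (if i = 1 \<or> i = 6 then beta 1 else if i = 3 \<or> i = 5 then beta 2
               else if i = 4 then beta 3 else beta 4)"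

definition pE6 :: "(nat \<Rightarrow> int) \<Rightarrow> real^4" where
  "pE6 x = (\<Sum>i\<in>{1..6}. real_of_int (x i) *\<^sub>R palpha i)"

definition admissibleF4 :: "(real^4) set \<Rightarrow> bool" where
  "admissibleF4 X \<longleftrightarrow> X \<subseteq> PsiF4_pos
     \<and> (\<forall>x\<in>X. \<forall>y\<in>X. x \<noteq> y \<longrightarrow> x \<bullet> y = 0)
     \<and> admissibleE6 {x \<in> PhiE6_pos. pE6 x \<in> X}"

text \<open>d plays the role of delta; r i, e i of r_i, e_i (i = 1..4)\<close>
definition BrF4_rels :: "'a::ring_1 \<Rightarrow> (nat \<Rightarrow> 'a) \<Rightarrow> (nat \<Rightarrow> 'a) \<Rightarrow> bool" where
  "BrF4_rels d r e \<longleftrightarrow>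
     (\<forall>i\<in>{1..4}. r i * r i = 1 \<and> r i * e i = e i \<and> e i * r i = e i)
   \<and> e 3 * e 3 = d * e 3 \<and> e 4 * e 4 = d * e 4
   \<and> e 1 * e 1 = d^2 * e 1 \<and> e 2 * e 2 = d^2 * e 2
   \<and> (\<forall>(i,j)\<in>{(1,3),(3,1),(1,4),(4,1),(2,4),(4,2)}.
        r i * r j = r j * r i \<and> e i * r j = r j * e i \<and> e i * e j = e j * e i)
   \<and> (\<forall>(i,j)\<in>{(1,2),(2,1),(3,4),(4,3)}.
        r i * r j * r i = r j * r i * r j \<and> r j * r i * e j = e i * e j
        \<and> r i * e j * r i = r j * e i * r j)
   \<and> r 2 * r 3 * r 2 * r 3 = r 3 * r 2 * r 3 * r 2
   \<and> r 2 * r 3 * e 2 = r 3 * e 2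
   \<and> r 2 * e 3 * r 2 * e 3 = e 3 * e 2 * e 3
   \<and> (r 2 * r 3 * r 2) * e 3 = e 3 * (r 2 * r 3 * r 2)
   \<and> e 2 * r 3 * e 2 = d * e 2
   \<and> e 2 * e 3 * e 2 = d * e 2
   \<and> e 2 * r 3 * r 2 = e 2 * r 3
   \<and> e 2 * e 3 * r 2 = e 2 * e 3"

text \<open>a Z[delta^{+-1}]-algebra: delta is central and invertible\<close>
definition central_unit :: "'a::ring_1 \<Rightarrow> bool" where
  "central_unit d \<longleftrightarrow> (\<forall>x. d * x = x * d) \<and> (\<exists>d'. d * d' = 1 \<and> d' * d = 1)"

definition rword :: "(nat \<Rightarrow> 'a::monoid_mult) \<Rightarrow> nat list \<Rightarrow> 'a" where
  "rword r w = prod_list (map r w)"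

text \<open>w e_i w^{-1}, with w^{-1} = r_{w_n} ... r_{w_1}\<close>
definition ebeta :: "(nat \<Rightarrow> 'a::monoid_mult) \<Rightarrow> (nat \<Rightarrow> 'a) \<Rightarrow> nat list \<Rightarrow> nat \<Rightarrow> 'a" where
  "ebeta r e w i = rword r w * e i * rword r (rev w)"

end

theory Submission
  imports Defs
begin

text \<open>
  In doubled coordinates the 48 roots of F4 are integer vectors, on which the simple
  reflections act by explicit integer maps. For each positive root \<open>\<beta>\<close> we fix a word \<open>E(\<beta>)\<close> in
  the generators of Br(F4). A word-rewriting certificate derives from the defining relations
  that \<open>r\<^sub>k E(\<beta>) r\<^sub>k = E(s\<^sub>k \<beta>)\<close> for every root \<open>\<beta>\<close> and every \<open>k\<close>, so by induction on \<open>w\<close> every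
  presentation \<open>w e\<^sub>i w\<^sup>-\<^sup>1\<close> of \<open>e\<^sub>\<beta>\<close> equals \<open>E(\<beta>)\<close>. Up to the action of W, orthogonal pairs of
  positive roots that are not both short are represented by \<open>{\<epsilon>\<^sub>3 - \<epsilon>\<^sub>2, \<epsilon>\<^sub>3 + \<epsilon>\<^sub>2}\<close> and
  \<open>{\<beta>\<^sub>1, \<epsilon>\<^sub>3 - \<epsilon>\<^sub>2}\<close>; for these two pairs the words commute by certified relations, and
  conjugation transports commutation along the orbit. An orthogonal pair of short roots never
  lies in an admissible set: it lifts to a pair of positive E6 roots that are not orthogonal.
\<close>

section \<open>Roots of F4 in doubled integer coordinates\<close>

lemma vector_4_nth [simp]:
  "(vector [x, y, z, w] :: 'a::zero^4) $ 1 = x"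
  "(vector [x, y, z, w] :: 'a::zero^4) $ 2 = y"
  "(vector [x, y, z, w] :: 'a::zero^4) $ 3 = z"
  "(vector [x, y, z, w] :: 'a::zero^4) $ 4 = w"
  by (simp_all add: vector_def)

definition vec_of_coords :: "int list \<Rightarrow> real^4" where
  "vec_of_coords t =
     vector [of_int (t!0) / 2, of_int (t!1) / 2, of_int (t!2) / 2, of_int (t!3) / 2]"

lemma vec_of_coords_nth [simp]:
  "vec_of_coords t $ 1 = of_int (t!0) / 2" "vec_of_coords t $ 2 = of_int (t!1) / 2"
  "vec_of_coords t $ 3 = of_int (t!2) / 2" "vec_of_coords t $ 4 = of_int (t!3) / 2"
  by (simp_all add: vec_of_coords_def)

lemma vec_of_coords_eq_iff:
  "vec_of_coords s = vec_of_coords t \<longleftrightarrow> s!0 = t!0 \<and> s!1 = t!1 \<and> s!2 = t!2 \<and> s!3 = t!3"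
  by (auto simp: vec_eq_iff forall_4)

definition dot_coords :: "int list \<Rightarrow> int list \<Rightarrow> int" where
  "dot_coords s t = s!0 * t!0 + s!1 * t!1 + s!2 * t!2 + s!3 * t!3"

definition is_short :: "int list \<Rightarrow> bool" where
  "is_short t \<longleftrightarrow> dot_coords t t = 4"

lemma inner_vec_of_coords: "vec_of_coords s \<bullet> vec_of_coords t = of_int (dot_coords s t) / 4"
  by (simp add: inner_vec_def sum_4 dot_coords_def field_simps)

definition simple_root_coords :: "nat \<Rightarrow> int list" where
  "simple_root_coords i =
     (if i = 1 then [1, -1, -1, -1] else if i = 2 then [0, 2, 0, 0]
      else if i = 3 then [0, -2, 2, 0] else [0, 0, -2, 2])"

lemma beta_eq_vec_of_coords: "beta i = vec_of_coords (simple_root_coords i)"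
  by (simp add: beta_def simple_root_coords_def vec_of_coords_def)

definition refl_coords :: "nat \<Rightarrow> int list \<Rightarrow> int list" where
  "refl_coords k t =
     (if k = 1 then (let m = (t!0 - t!1 - t!2 - t!3) div 2 in [t!0 - m, t!1 + m, t!2 + m, t!3 + m])
      else if k = 2 then [t!0, - t!1, t!2, t!3]
      else if k = 3 then [t!0, t!2, t!1, t!3]
      else [t!0, t!1, t!3, t!2])"

text \<open>The parity hypothesis holds on the root lattice; it makes the division in
  \<open>refl_coords 1\<close> exact.\<close>

lemma refl4_vec_of_coords:
  assumes "k \<in> {1..4}" and "even (t!0 - t!1 - t!2 - t!3)"
  shows "refl4 (beta k) (vec_of_coords t) = vec_of_coords (refl_coords k t)"
proof -
  obtain m where m: "t!0 - t!1 - t!2 - t!3 = 2 * m"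
    using assms(2) by (rule evenE)
  have coeff:
    "refl4 (beta k) (vec_of_coords t)
       = vec_of_coords t - c *\<^sub>R vec_of_coords (simple_root_coords k)"
    if "c = 2 * (of_int (dot_coords t (simple_root_coords k)) / 4)
              / (of_int (dot_coords (simple_root_coords k) (simple_root_coords k)) / 4)" for c
    using that by (simp add: refl4_def beta_eq_vec_of_coords inner_vec_of_coords)
  consider "k = 1" | "k = 2" | "k = 3" | "k = 4"
    using assms(1) by force
  then show ?thesis
  proof cases
    case 1
    have "(t!0 - t!1 - t!2 - t!3) div 2 = m"
      using m by simp
    with 1 m show ?thesis
      by (subst coeff[of "of_int m"])
        (simp_all add: dot_coords_def simple_root_coords_def refl_coords_def vec_eq_iff forall_4
          field_simps)
  next
    case 2
    then show ?thesis
      by (subst coeff[of "of_int (t!1)"])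
        (simp_all add: dot_coords_def simple_root_coords_def refl_coords_def vec_eq_iff forall_4
          field_simps)
  next
    case 3
    then show ?thesis
      by (subst coeff[of "of_int (t!2 - t!1) / 2"])
        (simp_all add: dot_coords_def simple_root_coords_def refl_coords_def vec_eq_iff forall_4
          field_simps)
  next
    case 4
    then show ?thesis
      by (subst coeff[of "of_int (t!3 - t!2) / 2"])
        (simp_all add: dot_coords_def simple_root_coords_def refl_coords_def vec_eq_iff forall_4
          field_simps)
  qed
qed

fun wact_coords :: "nat list \<Rightarrow> int list \<Rightarrow> int list" where
  "wact_coords [] t = t"
| "wact_coords (k # w) t = refl_coords k (wact_coords w t)"

definition F4_roots :: "int list list" where
  "F4_roots = [[-2, -2, 0, 0], [-2, 0, -2, 0], [-2, 0, 0, -2], [-2, 0, 0, 0], [-2, 0, 0, 2],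
      [-2, 0, 2, 0], [-2, 2, 0, 0], [-1, -1, -1, -1], [-1, -1, -1, 1], [-1, -1, 1, -1],
      [-1, -1, 1, 1], [-1, 1, -1, -1], [-1, 1, -1, 1], [-1, 1, 1, -1], [-1, 1, 1, 1],
      [0, -2, -2, 0], [0, -2, 0, -2], [0, -2, 0, 0], [0, -2, 0, 2], [0, -2, 2, 0],
      [0, 0, -2, -2], [0, 0, -2, 0], [0, 0, -2, 2], [0, 0, 0, -2], [0, 0, 0, 2],
      [0, 0, 2, -2], [0, 0, 2, 0], [0, 0, 2, 2], [0, 2, -2, 0], [0, 2, 0, -2], [0, 2, 0, 0],
      [0, 2, 0, 2], [0, 2, 2, 0], [1, -1, -1, -1], [1, -1, -1, 1], [1, -1, 1, -1],
      [1, -1, 1, 1], [1, 1, -1, -1], [1, 1, -1, 1], [1, 1, 1, -1], [1, 1, 1, 1],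
      [2, -2, 0, 0], [2, 0, -2, 0], [2, 0, 0, -2], [2, 0, 0, 0], [2, 0, 0, 2], [2, 0, 2, 0],
      [2, 2, 0, 0]]"

definition F4_pos_roots :: "int list list" where
  "F4_pos_roots = [[0, -2, 0, 2], [0, -2, 2, 0], [0, 0, -2, 2], [0, 0, 0, 2], [0, 0, 2, 0],
      [0, 0, 2, 2], [0, 2, 0, 0], [0, 2, 0, 2], [0, 2, 2, 0], [1, -1, -1, -1], [1, -1, -1, 1],
      [1, -1, 1, -1], [1, -1, 1, 1], [1, 1, -1, -1], [1, 1, -1, 1], [1, 1, 1, -1],
      [1, 1, 1, 1], [2, -2, 0, 0], [2, 0, -2, 0], [2, 0, 0, -2], [2, 0, 0, 0], [2, 0, 0, 2],
      [2, 0, 2, 0], [2, 2, 0, 0]]"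

lemma F4_roots_closed:
  "\<forall>t \<in> set F4_roots. even (t!0 - t!1 - t!2 - t!3)
     \<and> (\<forall>k \<in> {1, 2, 3, 4}. refl_coords k t \<in> set F4_roots)"
  by code_simp

lemma simple_roots_in_F4_roots: "\<forall>i \<in> {1, 2, 3, 4}. simple_root_coords i \<in> set F4_roots"
  by code_simp

lemma atLeastAtMost_1_4: "{1..4::nat} = {1, 2, 3, 4}"
  by auto

lemma wact_coords_in_F4_roots:
  assumes "set w \<subseteq> {1..4}" and "t \<in> set F4_roots"
  shows "wact_coords w t \<in> set F4_roots"
  using assms(1)
proof (induction w)
  case Nil
  show ?case
    using assms(2) by simp
next
  case (Cons k w)
  then have "k \<in> {1, 2, 3, 4}" and "wact_coords w t \<in> set F4_roots"
    by auto
  with F4_roots_closed have "refl_coords k (wact_coords w t) \<in> set F4_roots"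
    by blast
  then show ?case
    by simp
qed

lemma wact_vec_of_coords:
  assumes "set w \<subseteq> {1..4}" and "t \<in> set F4_roots"
  shows "wact w (vec_of_coords t) = vec_of_coords (wact_coords w t)"
  using assms(1)
proof (induction w)
  case Nil
  then show ?case by (simp add: wact_def)
next
  case (Cons k w)
  have "even (wact_coords w t!0 - wact_coords w t!1 - wact_coords w t!2 - wact_coords w t!3)"
    using F4_roots_closed wact_coords_in_F4_roots[OF _ assms(2)] Cons.prems by auto
  with Cons show ?case
    by (simp add: wact_def refl4_vec_of_coords)
qed

text \<open>The four quantities are positive multiples of the coefficients of the root in the basis
  \<open>\<beta>\<^sub>1, \<dots>, \<beta>\<^sub>4\<close>.\<close>

lemma F4_pos_roots_criterion:
  "\<forall>t \<in> set F4_roots. t!0 \<ge> 0 \<and> t!0 + t!3 \<ge> 0 \<and> 2 * t!0 + t!2 + t!3 \<ge> 0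
     \<and> 3 * t!0 + t!1 + t!2 + t!3 \<ge> 0 \<longrightarrow> t \<in> set F4_pos_roots"
  by code_simp

lemma in_F4_pos_roots:
  assumes "t \<in> set F4_roots" and "vec_of_coords t \<in> PsiF4_pos"
  shows "t \<in> set F4_pos_roots"
proof -
  obtain c :: "nat \<Rightarrow> real" where c: "\<forall>i. c i \<ge> 0"
    and sum: "vec_of_coords t = (\<Sum>i\<in>{1..4}. c i *\<^sub>R beta i)"
    using assms(2) unfolding PsiF4_pos_def by blast
  have "vec_of_coords t = c 1 *\<^sub>R beta 1 + c 2 *\<^sub>R beta 2 + c 3 *\<^sub>R beta 3 + c 4 *\<^sub>R beta 4"
    using sum unfolding atLeastAtMost_1_4 by (simp add: add.assoc)
  then have "of_int (t!0) = c 1" "of_int (t!1) = - c 1 + 2 * c 2 - 2 * c 3"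
    "of_int (t!2) = - c 1 + 2 * c 3 - 2 * c 4" "of_int (t!3) = - c 1 + 2 * c 4"
    by (simp_all add: beta_def vec_eq_iff forall_4 field_simps)
  moreover have "c 1 \<ge> 0" "c 2 \<ge> 0" "c 3 \<ge> 0" "c 4 \<ge> 0"
    using c by auto
  ultimately have "real_of_int (t!0) \<ge> 0" "real_of_int (t!0 + t!3) \<ge> 0"
    "real_of_int (2 * t!0 + t!2 + t!3) \<ge> 0" "real_of_int (3 * t!0 + t!1 + t!2 + t!3) \<ge> 0"
    by simp_all
  then have "t!0 \<ge> 0 \<and> t!0 + t!3 \<ge> 0 \<and> 2 * t!0 + t!2 + t!3 \<ge> 0 \<and> 3 * t!0 + t!1 + t!2 + t!3 \<ge> 0"
    by linarith
  with F4_pos_roots_criterion assms(1) show ?thesis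
    by blast
qed

section \<open>Words and certified rewriting\<close>

lemma rword_Nil [simp]: "rword f [] = 1"
  by (simp add: rword_def)

lemma rword_Cons [simp]: "rword f (k # w) = f k * rword f w"
  by (simp add: rword_def)

lemma rword_append: "rword f (u @ w) = rword f u * rword f w"
  by (simp add: rword_def)

lemma rword_rev_mult_rword:
  assumes "\<And>k. k \<in> set w \<Longrightarrow> f k * f k = 1"
  shows "rword f (rev w) * rword f w = 1"
  using assms
proof (induction w)
  case Nil
  then show ?case by simp
next
  case (Cons k w)
  have "rword f (rev (k # w)) * rword f (k # w) = rword f (rev w) * (f k * f k) * rword f w"
    by (simp add: rword_append mult.assoc)
  with Cons show ?case
    by simp
qed

definition rules_hold :: "(nat \<Rightarrow> 'a::monoid_mult) \<Rightarrow> (nat list \<times> nat list) list \<Rightarrow> bool" where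
  "rules_hold f rs \<longleftrightarrow> (\<forall>(L, R) \<in> set rs. rword f L = rword f R)"

text \<open>A step \<open>(i, p, b)\<close> replaces the occurrence at position \<open>p\<close> of one side of rule \<open>i\<close> by the
  other side; \<open>b\<close> selects the right-to-left direction.\<close>

definition rewrite_step ::
    "(nat list \<times> nat list) list \<Rightarrow> nat \<times> nat \<times> bool \<Rightarrow> nat list \<Rightarrow> nat list option" where
  "rewrite_step rs s w = (case s of (i, p, b) \<Rightarrow>
     if i < length rs then
       (let A = (if b then snd (rs!i) else fst (rs!i));
            B = (if b then fst (rs!i) else snd (rs!i))
        in if take (length A) (drop p w) = A then Some (take p w @ B @ drop (p + length A) w)
           else None)
     else None)"

fun rewrite_run ::
    "(nat list \<times> nat list) list \<Rightarrow> (nat \<times> nat \<times> bool) list \<Rightarrow> nat list \<Rightarrow> nat list option" where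
  "rewrite_run rs [] w = Some w"
| "rewrite_run rs (s # ss) w = Option.bind (rewrite_step rs s w) (rewrite_run rs ss)"

lemma rewrite_step_sound:
  assumes "rules_hold f rs" and "rewrite_step rs s w = Some w'"
  shows "rword f w = rword f w'"
proof -
  obtain i p b where s: "s = (i, p, b)"
    by (cases s) auto
  define A where "A = (if b then snd (rs!i) else fst (rs!i))"
  define B where "B = (if b then fst (rs!i) else snd (rs!i))"
  have i: "i < length rs" and A: "take (length A) (drop p w) = A"
    and w': "w' = take p w @ B @ drop (p + length A) w"
    using assms(2) unfolding rewrite_step_def s A_def B_def Let_def by (auto split: if_splits)
  have "rword f A = rword f B"
    using assms(1) nth_mem[OF i] unfolding rules_hold_def A_def B_def by auto
  moreover have "w = take p w @ A @ drop (p + length A) w"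
    by (metis A append_take_drop_id drop_drop add.commute)
  ultimately show ?thesis
    using w' by (metis rword_append)
qed

lemma rewrite_run_sound:
  assumes "rules_hold f rs" and "rewrite_run rs c w = Some w'"
  shows "rword f w = rword f w'"
  using assms(2)
proof (induction c arbitrary: w)
  case Nil
  then show ?case by simp
next
  case (Cons s c)
  then obtain v where "rewrite_step rs s w = Some v" and "rewrite_run rs c v = Some w'"
    by (auto split: Option.bind_splits)
  with Cons.IH rewrite_step_sound[OF assms(1)] show ?case
    by metis
qed

definition derives ::
    "(nat list \<times> nat list) list \<Rightarrow> (nat \<times> nat \<times> bool) list list \<Rightarrow> (nat list \<times> nat list) list \<Rightarrow> bool"
  where "derives rs cs targets \<longleftrightarrow> list_all2 (\<lambda>c (L, R). rewrite_run rs c L = Some R) cs targets"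

lemma derives_sound:
  assumes "rules_hold f rs" and "derives rs cs targets"
  shows "rules_hold f targets"
  unfolding rules_hold_def
proof (clarify)
  fix L R
  assume "(L, R) \<in> set targets"
  then obtain n where "n < length targets" and "targets ! n = (L, R)"
    by (auto simp: in_set_conv_nth)
  with assms(2) have "rewrite_run rs (cs ! n) L = Some R"
    unfolding derives_def by (metis (mono_tags) case_prod_conv list_all2_nthD2)
  then show "rword f L = rword f R"
    by (rule rewrite_run_sound[OF assms(1)])
qed

fun chain_valid ::
    "(nat list \<times> nat list) list \<Rightarrow> ((nat list \<times> nat list) \<times> (nat \<times> nat \<times> bool) list) list \<Rightarrow> bool"
  where
  "chain_valid rs [] = True"
| "chain_valid rs ((rl, c) # D) \<longleftrightarrow>
     rewrite_run rs c (fst rl) = Some (snd rl) \<and> chain_valid (rs @ [rl]) D"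

lemma chain_valid_sound:
  assumes "rules_hold f rs" and "chain_valid rs D"
  shows "rules_hold f (rs @ map fst D)"
  using assms
proof (induction D arbitrary: rs)
  case Nil
  then show ?case by simp
next
  case (Cons x D)
  obtain rl c where x: "x = (rl, c)"
    by (cases x)
  with Cons.prems have "rword f (fst rl) = rword f (snd rl)" and D: "chain_valid (rs @ [rl]) D"
    using rewrite_run_sound[OF Cons.prems(1)] by auto
  with Cons.prems(1) have "rules_hold f (rs @ [rl])"
    by (auto simp: rules_hold_def split: prod.splits)
  from Cons.IH[OF this D] x show ?case
    by simp
qed

text \<open>Letters \<open>1..4\<close> stand for \<open>r\<^sub>1..r\<^sub>4\<close> and letters \<open>5..8\<close> for \<open>e\<^sub>1..e\<^sub>4\<close>.\<close>

definition brauer_letter :: "(nat \<Rightarrow> 'a) \<Rightarrow> (nat \<Rightarrow> 'a) \<Rightarrow> nat \<Rightarrow> 'a" where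
  "brauer_letter r e k = (if k \<le> 4 then r k else e (k - 4))"

lemma brauer_letter_r: "k \<in> {1..4} \<Longrightarrow> brauer_letter r e k = r k"
  by (simp add: brauer_letter_def)

definition brauer_rules :: "(nat list \<times> nat list) list" where
  "brauer_rules = [([1, 1], []), ([2, 2], []), ([3, 3], []), ([4, 4], []), ([1, 2, 1],
        [2, 1, 2]), ([3, 4, 3], [4, 3, 4]), ([2, 3, 2, 3], [3, 2, 3, 2]), ([1, 3], [3, 1]),
      ([1, 4], [4, 1]), ([2, 4], [4, 2]), ([1, 5], [5]), ([5, 1], [5]), ([2, 6], [6]),
      ([6, 2], [6]), ([3, 7], [7]), ([7, 3], [7]), ([4, 8], [8]), ([8, 4], [8]), ([5, 3],
        [3, 5]), ([7, 1], [1, 7]), ([5, 7], [7, 5]), ([5, 4], [4, 5]), ([8, 1], [1, 8]),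
      ([6, 4], [4, 6]), ([8, 2], [2, 8]), ([1, 6, 1], [2, 5, 2]), ([4, 3, 8], [7, 8]),
      ([3, 8, 3], [4, 7, 4]), ([3, 4, 7], [8, 7]), ([2, 3, 6], [3, 6]), ([2, 7, 2, 7],
        [7, 6, 7]), ([2, 3, 2, 7], [7, 2, 3, 2]), ([6, 3, 2], [6, 3]), ([6, 7, 2], [6, 7])]"

lemma brauer_rules_hold:
  assumes "BrF4_rels d r e"
  shows "rules_hold (brauer_letter r e) brauer_rules"
proof -
  note rels = assms[unfolded BrF4_rels_def atLeastAtMost_1_4,
      simplified mult.assoc ball_simps split_conv]
  show ?thesis
    unfolding rules_hold_def brauer_rules_def
    by (simp add: brauer_letter_def mult.assoc) (use rels[unfolded One_nat_def] in blast)
qed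

definition lemma_chain :: "((nat list \<times> nat list) \<times> (nat \<times> nat \<times> bool) list) list" where
  "lemma_chain = [(([1, 7, 1], [7]), [(19, 1, False), (0, 0, False)]),
      (([3, 7, 3], [7]), [(15, 1, False), (14, 0, False)]),
      (([1, 8, 1], [8]), [(22, 1, False), (0, 0, False)]),
      (([2, 8, 2], [8]), [(24, 1, False), (1, 0, False)]),
      (([4, 8, 4], [8]), [(17, 1, False), (16, 0, False)]),
      (([2, 6, 2], [6]), [(13, 1, False), (12, 0, False)]),
      (([4, 6, 4], [6]), [(23, 1, False), (3, 0, False)]),
      (([1, 5, 1], [5]), [(11, 1, False), (10, 0, False)]),
      (([3, 5, 3], [5]), [(18, 1, False), (2, 0, False)]),
      (([4, 5, 4], [5]), [(21, 1, False), (3, 0, False)]),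
      (([1, 3, 8, 3, 1], [3, 8, 3]), [(7, 0, False), (7, 3, True), (36, 1, False)]),
      (([4, 3, 8, 3, 4], [7]), [(27, 1, False), (3, 0, False), (3, 1, False)]),
      (([4, 3, 8, 3], [7, 4]), [(27, 1, False), (3, 0, False)]),
      (([2, 3, 6, 3, 2], [3, 6, 3]), [(32, 2, False), (29, 0, False)]),
      (([2, 1, 6, 1, 2], [5]), [(25, 1, False), (1, 0, False), (1, 1, False)]),
      (([4, 1, 6, 1, 4], [1, 6, 1]), [(8, 3, False), (8, 0, True), (40, 1, False)]),
      (([2, 4, 3, 6, 3, 4, 2], [4, 3, 6, 3, 4]), [(9, 0, False), (9, 5, True),
        (47, 1, False)]),
      (([3, 4, 3, 6, 3, 4, 3], [4, 3, 6, 3, 4]), [(5, 0, False), (5, 4, False),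
        (40, 2, False)]),
      (([3, 2, 7, 2, 3], [2, 7, 2]), [(1, 0, True), (31, 1, False), (1, 4, False),
        (2, 3, False)]),
      (([3, 1, 3, 6, 3, 1, 3], [1, 6, 1]), [(7, 1, False), (2, 0, False), (7, 3, False),
        (2, 2, False)]),
      (([4, 2, 3, 8, 3, 2, 4], [2, 7, 2]), [(9, 5, False), (9, 0, True), (45, 1, False)]),
      (([4, 2, 3, 8, 3, 2], [2, 7, 2, 4]), [(9, 0, True), (46, 1, False), (9, 2, True)]),
      (([3, 1, 4, 3, 6, 3, 4, 1, 3], [1, 4, 3, 6, 3, 4, 1]), [(7, 7, False), (7, 0, True),
        (51, 1, False)]),
      (([4, 1, 4, 3, 6, 3, 4, 1, 4], [1, 3, 6, 3, 1]), [(8, 1, False), (3, 0, False),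
        (8, 5, False), (3, 4, False)]),
      (([4, 1, 4, 3, 6, 3, 4, 1], [1, 3, 6, 3, 1, 4]), [(8, 1, False), (3, 0, False),
        (8, 4, True)]),
      (([1, 2, 1, 3, 6, 3, 1, 2, 1], [2, 1, 3, 6, 3, 1, 2]), [(4, 0, False), (4, 6, False),
        (47, 2, False)]),
      (([3, 2, 1, 3, 6, 3, 1, 2, 3], [2, 1, 3, 6, 3, 1, 2]), [(7, 2, False), (7, 5, True),
        (25, 3, False), (6, 5, False), (6, 0, True), (42, 3, False), (25, 2, True),
        (7, 4, False), (7, 1, True)]),
      (([2, 3, 2, 3, 8, 3, 2, 3, 2], [3, 2, 3, 8, 3, 2, 3]), [(6, 0, False), (6, 5, True),
        (37, 3, False)]),
      (([4, 3, 2, 3, 8, 3, 2, 3, 4], [3, 2, 3, 8, 3, 2, 3]), [(27, 3, False), (9, 2, False),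
        (5, 0, True), (9, 5, True), (5, 6, True), (52, 2, False), (55, 2, True),
        (3, 1, False)]),
      (([1, 2, 1, 4, 3, 6, 3, 4, 1, 2, 1], [2, 1, 4, 3, 6, 3, 4, 1, 2]), [(4, 0, False),
        (4, 8, False), (50, 2, False)]),
      (([4, 2, 1, 4, 3, 6, 3, 4, 1, 2, 4], [2, 1, 3, 6, 3, 1, 2]), [(9, 9, False),
        (9, 0, True), (57, 1, False)]),
      (([4, 2, 1, 4, 3, 6, 3, 4, 1, 2], [2, 1, 3, 6, 3, 1, 2, 4]), [(9, 0, True),
        (58, 1, False), (9, 6, True)]),
      (([2, 1, 2, 7, 2, 1, 2], [1, 2, 7, 2, 1]), [(4, 0, True), (4, 4, True),
        (34, 2, False)]),
      (([3, 1, 2, 7, 2, 1, 3], [1, 2, 7, 2, 1]), [(7, 5, False), (7, 0, True),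
        (52, 1, False)]),
      (([1, 3, 2, 1, 4, 3, 6, 3, 4, 1, 2, 3, 1], [3, 2, 1, 4, 3, 6, 3, 4, 1, 2, 3]),
        [(7, 0, False), (7, 11, True), (63, 1, False)]),
      (([4, 3, 2, 1, 4, 3, 6, 3, 4, 1, 2, 3, 4], [3, 2, 1, 4, 3, 6, 3, 4, 1, 2, 3]),
        [(8, 3, False), (8, 8, True), (9, 2, False), (5, 0, True), (9, 9, True),
        (5, 10, True), (60, 2, False), (65, 2, True), (3, 1, False)]),
      (([2, 1, 2, 3, 8, 3, 2, 1, 2], [1, 2, 3, 8, 3, 2, 1]), [(4, 0, True), (4, 6, True),
        (44, 2, False)]),
      (([4, 1, 2, 3, 8, 3, 2, 1, 4], [1, 2, 7, 2, 1]), [(8, 7, False), (8, 0, True),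
        (54, 1, False)]),
      (([3, 2, 3, 2, 1, 4, 3, 6, 3, 4, 1, 2, 3, 2, 3],
        [2, 3, 2, 1, 4, 3, 6, 3, 4, 1, 2, 3, 2]), [(6, 11, False), (6, 0, True),
        (56, 3, False)]),
      (([4, 2, 3, 2, 1, 4, 3, 6, 3, 4, 1, 2, 3, 2, 4],
        [2, 3, 2, 1, 4, 3, 6, 3, 4, 1, 2, 3, 2]), [(9, 13, False), (9, 0, True),
        (69, 1, False)]),
      (([3, 1, 3, 2, 3, 8, 3, 2, 3, 1, 3], [1, 2, 3, 8, 3, 2, 1]), [(7, 1, False),
        (2, 0, False), (7, 7, False), (2, 6, False)]),
      (([4, 1, 3, 2, 3, 8, 3, 2, 3, 1, 4], [1, 3, 2, 3, 8, 3, 2, 3, 1]), [(8, 9, False),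
        (8, 0, True), (62, 1, False)]),
      (([2, 1, 2, 3, 2, 1, 4, 3, 6, 3, 4, 1, 2, 3, 2, 1, 2],
        [1, 2, 3, 2, 1, 4, 3, 6, 3, 4, 1, 2, 3, 2, 1]), [(4, 0, True), (4, 14, True),
        (68, 2, False)]),
      (([3, 1, 2, 3, 2, 1, 4, 3, 6, 3, 4, 1, 2, 3, 2, 1, 3],
        [1, 2, 3, 2, 1, 4, 3, 6, 3, 4, 1, 2, 3, 2, 1]), [(7, 15, False), (7, 0, True),
        (72, 1, False)]),
      (([4, 1, 2, 3, 2, 1, 4, 3, 6, 3, 4, 1, 2, 3, 2, 1, 4],
        [1, 2, 3, 2, 1, 4, 3, 6, 3, 4, 1, 2, 3, 2, 1]), [(8, 15, False), (8, 0, True),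
        (73, 1, False)]),
      (([1, 2, 1, 3, 2, 3, 8, 3, 2, 3, 1, 2, 1], [2, 1, 3, 2, 3, 8, 3, 2, 3, 1, 2]),
        [(4, 0, False), (4, 10, False), (61, 2, False)]),
      (([4, 2, 1, 3, 2, 3, 8, 3, 2, 3, 1, 2, 4], [2, 1, 3, 2, 3, 8, 3, 2, 3, 1, 2]),
        [(9, 11, False), (9, 0, True), (75, 1, False)]),
      (([1, 3, 2, 1, 3, 2, 3, 8, 3, 2, 3, 1, 2, 3, 1],
        [3, 2, 1, 3, 2, 3, 8, 3, 2, 3, 1, 2, 3]), [(7, 0, False), (7, 13, True),
        (79, 1, False)]),
      (([2, 3, 2, 1, 3, 2, 3, 8, 3, 2, 3, 1, 2, 3, 2],
        [3, 2, 1, 3, 2, 3, 8, 3, 2, 3, 1, 2, 3]), [(7, 3, False), (6, 0, False),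
        (7, 10, True), (6, 11, True), (70, 3, False), (7, 9, False), (7, 2, True)]),
      (([1, 4, 3, 2, 1, 3, 2, 3, 8, 3, 2, 3, 1, 2, 3, 4, 1],
        [4, 3, 2, 1, 3, 2, 3, 8, 3, 2, 3, 1, 2, 3, 4]), [(8, 0, False), (8, 15, True),
        (81, 1, False)]),
      (([2, 4, 3, 2, 1, 3, 2, 3, 8, 3, 2, 3, 1, 2, 3, 4, 2],
        [4, 3, 2, 1, 3, 2, 3, 8, 3, 2, 3, 1, 2, 3, 4]), [(9, 0, False), (9, 15, True),
        (82, 1, False)]),
      (([3, 4, 3, 2, 1, 3, 2, 3, 8, 3, 2, 3, 1, 2, 3, 4, 3],
        [4, 3, 2, 1, 3, 2, 3, 8, 3, 2, 3, 1, 2, 3, 4]), [(5, 0, False), (5, 14, False),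
        (80, 2, False)]),
      (([7, 2, 7], [7, 6, 7]), [(3, 0, True), (2, 1, True), (28, 2, False), (26, 0, False),
        (37, 1, True), (30, 3, False), (28, 2, True), (40, 5, True), (27, 3, True),
        (2, 2, False), (24, 1, True), (26, 0, True), (29, 3, False), (46, 0, False),
        (40, 1, False)])]"

lemma lemma_chain_valid: "chain_valid brauer_rules lemma_chain"
  by code_simp

definition auxiliary_rules :: "(nat list \<times> nat list) list" where
  "auxiliary_rules = brauer_rules @ map fst lemma_chain"

lemma auxiliary_rules_hold:
  assumes "BrF4_rels d r e"
  shows "rules_hold (brauer_letter r e) auxiliary_rules"
  unfolding auxiliary_rules_def
  by (rule chain_valid_sound[OF brauer_rules_hold[OF assms] lemma_chain_valid])

definition pos_coords :: "int list \<Rightarrow> int list" where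
  "pos_coords t = (if t \<in> set F4_pos_roots then t else map uminus t)"

definition root_word_table :: "(int list \<times> nat list) list" where
  "root_word_table = [([0, -2, 0, 2], [3, 8, 3]),
      ([0, -2, 2, 0], [7]),
      ([0, 0, -2, 2], [8]),
      ([0, 0, 0, 2], [4, 3, 6, 3, 4]),
      ([0, 0, 2, 0], [3, 6, 3]),
      ([0, 0, 2, 2], [3, 2, 3, 8, 3, 2, 3]),
      ([0, 2, 0, 0], [6]),
      ([0, 2, 0, 2], [2, 3, 8, 3, 2]),
      ([0, 2, 2, 0], [2, 7, 2]),
      ([1, -1, -1, -1], [5]),
      ([1, -1, -1, 1], [1, 4, 3, 6, 3, 4, 1]),
      ([1, -1, 1, -1], [1, 3, 6, 3, 1]),
      ([1, -1, 1, 1], [3, 2, 1, 4, 3, 6, 3, 4, 1, 2, 3]),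
      ([1, 1, -1, -1], [1, 6, 1]),
      ([1, 1, -1, 1], [2, 1, 4, 3, 6, 3, 4, 1, 2]),
      ([1, 1, 1, -1], [2, 1, 3, 6, 3, 1, 2]),
      ([1, 1, 1, 1], [2, 3, 2, 1, 4, 3, 6, 3, 4, 1, 2, 3, 2]),
      ([2, -2, 0, 0], [1, 3, 2, 3, 8, 3, 2, 3, 1]),
      ([2, 0, -2, 0], [1, 2, 3, 8, 3, 2, 1]),
      ([2, 0, 0, -2], [1, 2, 7, 2, 1]),
      ([2, 0, 0, 0], [1, 2, 3, 2, 1, 4, 3, 6, 3, 4, 1, 2, 3, 2, 1]),
      ([2, 0, 0, 2], [4, 3, 2, 1, 3, 2, 3, 8, 3, 2, 3, 1, 2, 3, 4]),
      ([2, 0, 2, 0], [3, 2, 1, 3, 2, 3, 8, 3, 2, 3, 1, 2, 3]),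
      ([2, 2, 0, 0], [2, 1, 3, 2, 3, 8, 3, 2, 3, 1, 2])]"

text \<open>The word depends only on \<open>\<plusminus>t\<close>, since \<open>e\<^bsub>-\<beta>\<^esub> = e\<^sub>\<beta>\<close>; it is meaningless off the roots.\<close>

definition root_word :: "int list \<Rightarrow> nat list" where
  "root_word t = the (map_of root_word_table (pos_coords t))"

definition e_root :: "(nat \<Rightarrow> 'a::monoid_mult) \<Rightarrow> (nat \<Rightarrow> 'a) \<Rightarrow> int list \<Rightarrow> 'a" where
  "e_root r e t = rword (brauer_letter r e) (root_word t)"

lemma root_word_simple: "\<forall>i \<in> {1, 2, 3, 4}. root_word (simple_root_coords i) = [i + 4]"
  by code_simp

definition conjugation_rules :: "(nat list \<times> nat list) list" where
  "conjugation_rules =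
     map (\<lambda>(t, k). ([k] @ root_word t @ [k], root_word (refl_coords k t)))
       (List.product F4_roots [1, 2, 3, 4])"

definition conjugation_scripts :: "(nat \<times> nat \<times> bool) list list" where
  "conjugation_scripts = [[(79, 0, False)], [(1, 11, False), (1, 0, False)], [],
        [(80, 0, False)],
      [(81, 0, False)], [(82, 0, False)], [(2, 13, False), (2, 0, False)], [],
      [(83, 0, False)], [(84, 0, False)], [(85, 0, False)], [(3, 15, False), (3, 0, False)],
      [(0, 15, False), (0, 0, False)], [(76, 0, False)], [(77, 0, False)], [(78, 0, False)],
      [(0, 5, False), (0, 0, False)], [(66, 0, False)], [(67, 0, False)], [(8, 5, False),
        (9, 4, False), (8, 0, True), (9, 1, True), (27, 2, True)],
      [(0, 7, False), (0, 0, False)], [(70, 0, False)], [(7, 7, False), (7, 0, True)],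
        [(71, 0, False)],
      [(0, 9, False), (0, 0, False)], [], [(74, 0, False)], [(75, 0, False)],
      [], [(1, 13, False), (1, 0, False)], [(72, 0, False)], [(73, 0, False)],
      [(59, 0, False)], [(1, 7, False), (1, 0, False)], [(60, 0, False)], [(9, 7, False),
        (8, 6, False), (9, 0, True), (8, 1, True)],
      [(63, 0, False)], [(1, 9, False), (1, 0, False)], [], [(64, 0, False)],
      [(0, 3, False), (0, 0, False)], [(48, 0, False)], [(7, 3, False), (7, 0, True)],
        [(49, 0, False)],
      [(68, 0, False)], [], [(2, 11, False), (2, 0, False)], [(69, 0, False)],
      [(0, 5, False), (0, 0, False)], [], [(53, 0, False)], [(8, 5, False), (8, 0, True)],
      [(0, 7, False), (0, 0, False)], [], [(56, 0, False)], [(57, 0, False)],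
      [(41, 0, False)], [(25, 0, True)], [(42, 0, False)], [(43, 0, False)],
      [], [(1, 3, False), (1, 0, False)], [(52, 0, False)], [(9, 3, False), (9, 0, True),
        (27, 1, True)],
      [], [(1, 5, False), (1, 0, False)], [], [(54, 0, False)],
      [], [(39, 0, False)], [], [(40, 0, False)],
      [(44, 0, False)], [], [(2, 3, False), (2, 0, False)], [(45, 0, False)],
      [(34, 0, False)], [], [(35, 0, False)], [(27, 0, True)],
      [], [(61, 0, False)], [(2, 7, False), (2, 0, False)], [(62, 0, False)],
      [], [(47, 0, False)], [(2, 3, False), (2, 0, False)], [],
      [(36, 0, False)], [(37, 0, False)], [], [(38, 0, False)],
      [], [(50, 0, False)], [(51, 0, False)], [(3, 5, False), (3, 0, False)],
      [], [(50, 0, False)], [(51, 0, False)], [(3, 5, False), (3, 0, False)],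
      [(36, 0, False)], [(37, 0, False)], [], [(38, 0, False)],
      [], [(47, 0, False)], [(2, 3, False), (2, 0, False)], [],
      [], [(61, 0, False)], [(2, 7, False), (2, 0, False)], [(62, 0, False)],
      [(34, 0, False)], [], [(35, 0, False)], [(27, 0, True)],
      [(44, 0, False)], [], [(2, 3, False), (2, 0, False)], [(45, 0, False)],
      [], [(39, 0, False)], [], [(40, 0, False)],
      [], [(1, 5, False), (1, 0, False)], [], [(54, 0, False)],
      [], [(1, 3, False), (1, 0, False)], [(52, 0, False)], [(9, 3, False), (9, 0, True),
        (27, 1, True)],
      [(41, 0, False)], [(25, 0, True)], [(42, 0, False)], [(43, 0, False)],
      [(0, 7, False), (0, 0, False)], [], [(56, 0, False)], [(57, 0, False)],
      [(0, 5, False), (0, 0, False)], [], [(53, 0, False)], [(8, 5, False), (8, 0, True)],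
      [(68, 0, False)], [], [(2, 11, False), (2, 0, False)], [(69, 0, False)],
      [(0, 3, False), (0, 0, False)], [(48, 0, False)], [(7, 3, False), (7, 0, True)],
        [(49, 0, False)],
      [(63, 0, False)], [(1, 9, False), (1, 0, False)], [], [(64, 0, False)],
      [(59, 0, False)], [(1, 7, False), (1, 0, False)], [(60, 0, False)], [(9, 7, False),
        (8, 6, False), (9, 0, True), (8, 1, True)],
      [], [(1, 13, False), (1, 0, False)], [(72, 0, False)], [(73, 0, False)],
      [(0, 9, False), (0, 0, False)], [], [(74, 0, False)], [(75, 0, False)],
      [(0, 7, False), (0, 0, False)], [(70, 0, False)], [(7, 7, False), (7, 0, True)],
        [(71, 0, False)],
      [(0, 5, False), (0, 0, False)], [(66, 0, False)], [(67, 0, False)], [(8, 5, False),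
        (9, 4, False), (8, 0, True), (9, 1, True), (27, 2, True)],
      [(0, 15, False), (0, 0, False)], [(76, 0, False)], [(77, 0, False)], [(78, 0, False)],
      [(83, 0, False)], [(84, 0, False)], [(85, 0, False)], [(3, 15, False), (3, 0, False)],
      [(81, 0, False)], [(82, 0, False)], [(2, 13, False), (2, 0, False)], [],
      [(79, 0, False)], [(1, 11, False), (1, 0, False)], [], [(80, 0, False)]]"

lemma conjugation_rules_derived: "derives auxiliary_rules conjugation_scripts conjugation_rules"
  by code_simp

lemma e_root_conj:
  assumes "BrF4_rels d r e" and "t \<in> set F4_roots" and "k \<in> {1..4}"
  shows "r k * e_root r e t * r k = e_root r e (refl_coords k t)"
proof -
  have "(t, k) \<in> set (List.product F4_roots [1, 2, 3, 4])"
    using assms(2,3) by auto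
  then have "([k] @ root_word t @ [k], root_word (refl_coords k t)) \<in> set conjugation_rules"
    unfolding conjugation_rules_def by force
  with derives_sound[OF auxiliary_rules_hold[OF assms(1)] conjugation_rules_derived]
  show ?thesis
    using assms(3) by (auto simp: rules_hold_def e_root_def rword_append brauer_letter_r mult.assoc)
qed

lemma e_root_wact_coords:
  assumes "BrF4_rels d r e" and "set w \<subseteq> {1..4}" and "t \<in> set F4_roots"
  shows "e_root r e (wact_coords w t) = rword r w * e_root r e t * rword r (rev w)"
  using assms(2)
proof (induction w)
  case Nil
  then show ?case by simp
next
  case (Cons k w)
  have k: "k \<in> {1..4}" and w: "set w \<subseteq> {1..4}"
    using Cons.prems by auto
  have "e_root r e (wact_coords (k # w) t) = r k * e_root r e (wact_coords w t) * r k"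
    using e_root_conj[OF assms(1) wact_coords_in_F4_roots[OF w assms(3)] k] by simp
  also have "\<dots> = rword r (k # w) * e_root r e t * rword r (rev (k # w))"
    using Cons.IH[OF w] by (simp add: rword_append mult.assoc)
  finally show ?case .
qed

lemma ebeta_eq_e_root:
  assumes "BrF4_rels d r e" and "set w \<subseteq> {1..4}" and "i \<in> {1..4}"
  shows "ebeta r e w i = e_root r e (wact_coords w (simple_root_coords i))"
proof -
  have i: "i \<in> {1, 2, 3, 4}"
    using assms(3) by auto
  with root_word_simple have "root_word (simple_root_coords i) = [i + 4]"
    by blast
  then have "e_root r e (simple_root_coords i) = e i"
    using assms(3) by (simp add: e_root_def brauer_letter_def)
  moreover have "simple_root_coords i \<in> set F4_roots"
    using simple_roots_in_F4_roots i by blast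
  ultimately show ?thesis
    using e_root_wact_coords[OF assms(1,2)] by (simp add: ebeta_def)
qed

section \<open>Commuting \<open>e\<^sub>\<beta>\<close> for orthogonal roots\<close>

lemma conj_commute:
  fixes x y u v :: "'a::monoid_mult"
  assumes "v * u = 1" and "x * y = y * x"
  shows "(u * x * v) * (u * y * v) = (u * y * v) * (u * x * v)"
proof -
  have "(u * x * v) * (u * y * v) = u * (x * (v * u) * y) * v"
    by (simp add: mult.assoc)
  also have "\<dots> = u * (y * (v * u) * x) * v"
    using assms by simp
  finally show ?thesis
    by (simp add: mult.assoc)
qed

definition orbit_reps :: "(int list \<times> int list) list" where
  "orbit_reps = [([0, -2, 2, 0], [0, 2, 2, 0]), ([1, -1, -1, -1], [0, -2, 2, 0])]"

definition commutation_scripts :: "(nat \<times> nat \<times> bool) list list" where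
  "commutation_scripts = [[(86, 0, False), (33, 1, False), (30, 0, True)], [(20, 0, False)]]"

lemma commutation_rules_derived:
  "derives auxiliary_rules commutation_scripts
     [(root_word a @ root_word b, root_word b @ root_word a). (a, b) \<leftarrow> orbit_reps]"
  by code_simp

lemma e_root_orbit_reps_commute:
  assumes "BrF4_rels d r e" and "(a, b) \<in> set orbit_reps \<or> (b, a) \<in> set orbit_reps"
  shows "e_root r e a * e_root r e b = e_root r e b * e_root r e a"
  using derives_sound[OF auxiliary_rules_hold[OF assms(1)] commutation_rules_derived] assms(2)
  by (auto simp: rules_hold_def e_root_def rword_append)

text \<open>An entry \<open>((t\<^sub>1, t\<^sub>2), w, a, b)\<close> records that \<open>w\<close> maps the representative pair \<open>(a, b)\<close> to
  \<open>(\<plusminus>t\<^sub>1, \<plusminus>t\<^sub>2)\<close>.\<close>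

definition orbit_table :: "((int list \<times> int list) \<times> nat list \<times> int list \<times> int list) list" where
  "orbit_table = [(([0, -2, 0, 2], [0, 0, 2, 0]), [3, 1, 2, 3, 4], [0, -2, 2, 0],
        [1, -1, -1, -1]),
      (([0, -2, 0, 2], [0, 2, 0, 2]), [4], [0, -2, 2, 0], [0, 2, 2, 0]),
      (([0, -2, 0, 2], [1, -1, -1, -1]), [4], [0, -2, 2, 0], [1, -1, -1, -1]),
      (([0, -2, 0, 2], [1, -1, 1, -1]), [3, 2, 3, 4], [0, -2, 2, 0], [1, -1, -1, -1]),
      (([0, -2, 0, 2], [1, 1, -1, 1]), [4, 2, 3, 2], [0, -2, 2, 0], [1, -1, -1, -1]),
      (([0, -2, 0, 2], [1, 1, 1, 1]), [3, 2, 3, 4, 2, 3, 2], [0, -2, 2, 0], [1, -1, -1, -1]),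
      (([0, -2, 0, 2], [2, 0, -2, 0]), [4, 1], [0, -2, 2, 0], [0, 2, 2, 0]),
      (([0, -2, 0, 2], [2, 0, 0, 0]), [3, 1, 2, 3, 4, 2, 3, 2], [0, -2, 2, 0],
        [1, -1, -1, -1]),
      (([0, -2, 0, 2], [2, 0, 2, 0]), [3, 2, 3, 4, 1], [0, -2, 2, 0], [0, 2, 2, 0]),
      (([0, -2, 2, 0], [0, 0, 0, 2]), [4, 3, 1, 2, 3, 4], [0, -2, 2, 0], [1, -1, -1, -1]),
      (([0, -2, 2, 0], [0, 2, 2, 0]), [], [0, -2, 2, 0], [0, 2, 2, 0]),
      (([0, -2, 2, 0], [1, -1, -1, -1]), [], [0, -2, 2, 0], [1, -1, -1, -1]),
      (([0, -2, 2, 0], [1, -1, -1, 1]), [4, 3, 2, 3, 4], [0, -2, 2, 0], [1, -1, -1, -1]),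
      (([0, -2, 2, 0], [1, 1, 1, -1]), [2, 3, 2], [0, -2, 2, 0], [1, -1, -1, -1]),
      (([0, -2, 2, 0], [1, 1, 1, 1]), [4, 3, 2, 3, 4, 2, 3, 2], [0, -2, 2, 0],
        [1, -1, -1, -1]),
      (([0, -2, 2, 0], [2, 0, 0, -2]), [1], [0, -2, 2, 0], [0, 2, 2, 0]),
      (([0, -2, 2, 0], [2, 0, 0, 0]), [4, 3, 1, 2, 3, 4, 2, 3, 2], [0, -2, 2, 0],
        [1, -1, -1, -1]),
      (([0, -2, 2, 0], [2, 0, 0, 2]), [4, 3, 2, 3, 4, 1], [0, -2, 2, 0], [0, 2, 2, 0]),
      (([0, 0, -2, 2], [0, 0, 2, 2]), [3, 4], [0, -2, 2, 0], [0, 2, 2, 0]),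
      (([0, 0, -2, 2], [0, 2, 0, 0]), [1, 2, 3, 4], [0, -2, 2, 0], [1, -1, -1, -1]),
      (([0, 0, -2, 2], [1, -1, -1, -1]), [3, 4], [0, -2, 2, 0], [1, -1, -1, -1]),
      (([0, 0, -2, 2], [1, -1, 1, 1]), [3, 4, 2, 3, 2], [0, -2, 2, 0], [1, -1, -1, -1]),
      (([0, 0, -2, 2], [1, 1, -1, -1]), [2, 3, 4], [0, -2, 2, 0], [1, -1, -1, -1]),
      (([0, 0, -2, 2], [1, 1, 1, 1]), [2, 3, 4, 2, 3, 2], [0, -2, 2, 0], [1, -1, -1, -1]),
      (([0, 0, -2, 2], [2, -2, 0, 0]), [3, 4, 1], [0, -2, 2, 0], [0, 2, 2, 0]),
      (([0, 0, -2, 2], [2, 0, 0, 0]), [1, 2, 3, 4, 2, 3, 2], [0, -2, 2, 0], [1, -1, -1, -1]),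
      (([0, 0, -2, 2], [2, 2, 0, 0]), [2, 3, 4, 1], [0, -2, 2, 0], [0, 2, 2, 0]),
      (([0, 0, 0, 2], [0, -2, 2, 0]), [4, 3, 1, 2, 3, 4], [1, -1, -1, -1], [0, -2, 2, 0]),
      (([0, 0, 0, 2], [0, 2, 2, 0]), [4, 2, 3, 1, 2, 3, 4], [1, -1, -1, -1], [0, -2, 2, 0]),
      (([0, 0, 0, 2], [2, -2, 0, 0]), [3, 4, 3, 1, 2], [1, -1, -1, -1], [0, -2, 2, 0]),
      (([0, 0, 0, 2], [2, 0, -2, 0]), [4, 3, 1, 2], [1, -1, -1, -1], [0, -2, 2, 0]),
      (([0, 0, 0, 2], [2, 0, 2, 0]), [3, 2, 3, 4, 3, 1, 2], [1, -1, -1, -1], [0, -2, 2, 0]),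
      (([0, 0, 0, 2], [2, 2, 0, 0]), [2, 3, 4, 3, 1, 2], [1, -1, -1, -1], [0, -2, 2, 0]),
      (([0, 0, 2, 0], [0, -2, 0, 2]), [3, 1, 2, 3, 4], [1, -1, -1, -1], [0, -2, 2, 0]),
      (([0, 0, 2, 0], [0, 2, 0, 2]), [2, 3, 1, 2, 3, 4], [1, -1, -1, -1], [0, -2, 2, 0]),
      (([0, 0, 2, 0], [2, -2, 0, 0]), [3, 4, 1, 2], [1, -1, -1, -1], [0, -2, 2, 0]),
      (([0, 0, 2, 0], [2, 0, 0, -2]), [3, 1, 2], [1, -1, -1, -1], [0, -2, 2, 0]),
      (([0, 0, 2, 0], [2, 0, 0, 2]), [4, 3, 2, 3, 4, 3, 1, 2], [1, -1, -1, -1],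
        [0, -2, 2, 0]),
      (([0, 0, 2, 0], [2, 2, 0, 0]), [2, 3, 4, 1, 2], [1, -1, -1, -1], [0, -2, 2, 0]),
      (([0, 0, 2, 2], [0, 0, -2, 2]), [3, 4], [0, 2, 2, 0], [0, -2, 2, 0]),
      (([0, 0, 2, 2], [0, 2, 0, 0]), [3, 2, 3, 1, 2, 3, 4], [0, -2, 2, 0], [1, -1, -1, -1]),
      (([0, 0, 2, 2], [1, -1, -1, 1]), [3, 4, 3, 2], [0, -2, 2, 0], [1, -1, -1, -1]),
      (([0, 0, 2, 2], [1, -1, 1, -1]), [3, 4, 2], [0, -2, 2, 0], [1, -1, -1, -1]),
      (([0, 0, 2, 2], [1, 1, -1, 1]), [2, 3, 4, 3, 2], [0, -2, 2, 0], [1, -1, -1, -1]),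
      (([0, 0, 2, 2], [1, 1, 1, -1]), [2, 3, 4, 2], [0, -2, 2, 0], [1, -1, -1, -1]),
      (([0, 0, 2, 2], [2, -2, 0, 0]), [3, 4, 2, 1], [0, -2, 2, 0], [0, 2, 2, 0]),
      (([0, 0, 2, 2], [2, 0, 0, 0]), [3, 2, 3, 1, 2, 3, 4, 2, 3, 2], [0, -2, 2, 0],
        [1, -1, -1, -1]),
      (([0, 0, 2, 2], [2, 2, 0, 0]), [2, 3, 4, 2, 1], [0, -2, 2, 0], [0, 2, 2, 0]),
      (([0, 2, 0, 0], [0, 0, -2, 2]), [1, 2, 3, 4], [1, -1, -1, -1], [0, -2, 2, 0]),
      (([0, 2, 0, 0], [0, 0, 2, 2]), [3, 2, 3, 1, 2, 3, 4], [1, -1, -1, -1], [0, -2, 2, 0]),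
      (([0, 2, 0, 0], [2, 0, -2, 0]), [4, 1, 2], [1, -1, -1, -1], [0, -2, 2, 0]),
      (([0, 2, 0, 0], [2, 0, 0, -2]), [1, 2], [1, -1, -1, -1], [0, -2, 2, 0]),
      (([0, 2, 0, 0], [2, 0, 0, 2]), [4, 3, 2, 3, 4, 1, 2], [1, -1, -1, -1], [0, -2, 2, 0]),
      (([0, 2, 0, 0], [2, 0, 2, 0]), [3, 2, 3, 4, 1, 2], [1, -1, -1, -1], [0, -2, 2, 0]),
      (([0, 2, 0, 2], [0, -2, 0, 2]), [4], [0, 2, 2, 0], [0, -2, 2, 0]),
      (([0, 2, 0, 2], [0, 0, 2, 0]), [2, 3, 1, 2, 3, 4], [0, -2, 2, 0], [1, -1, -1, -1]),
      (([0, 2, 0, 2], [1, -1, -1, 1]), [4, 3, 2], [0, -2, 2, 0], [1, -1, -1, -1]),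
      (([0, 2, 0, 2], [1, -1, 1, 1]), [3, 2, 3, 4, 3, 2], [0, -2, 2, 0], [1, -1, -1, -1]),
      (([0, 2, 0, 2], [1, 1, -1, -1]), [4, 2], [0, -2, 2, 0], [1, -1, -1, -1]),
      (([0, 2, 0, 2], [1, 1, 1, -1]), [3, 2, 3, 4, 2], [0, -2, 2, 0], [1, -1, -1, -1]),
      (([0, 2, 0, 2], [2, 0, -2, 0]), [4, 2, 1], [0, -2, 2, 0], [0, 2, 2, 0]),
      (([0, 2, 0, 2], [2, 0, 0, 0]), [2, 3, 1, 2, 3, 4, 2, 3, 2], [0, -2, 2, 0],
        [1, -1, -1, -1]),
      (([0, 2, 0, 2], [2, 0, 2, 0]), [3, 2, 3, 4, 2, 1], [0, -2, 2, 0], [0, 2, 2, 0]),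
      (([0, 2, 2, 0], [0, -2, 2, 0]), [], [0, 2, 2, 0], [0, -2, 2, 0]),
      (([0, 2, 2, 0], [0, 0, 0, 2]), [4, 2, 3, 1, 2, 3, 4], [0, -2, 2, 0], [1, -1, -1, -1]),
      (([0, 2, 2, 0], [1, -1, 1, -1]), [3, 2], [0, -2, 2, 0], [1, -1, -1, -1]),
      (([0, 2, 2, 0], [1, -1, 1, 1]), [4, 3, 2, 3, 4, 3, 2], [0, -2, 2, 0], [1, -1, -1, -1]),
      (([0, 2, 2, 0], [1, 1, -1, -1]), [2], [0, -2, 2, 0], [1, -1, -1, -1]),
      (([0, 2, 2, 0], [1, 1, -1, 1]), [4, 3, 2, 3, 4, 2], [0, -2, 2, 0], [1, -1, -1, -1]),
      (([0, 2, 2, 0], [2, 0, 0, -2]), [2, 1], [0, -2, 2, 0], [0, 2, 2, 0]),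
      (([0, 2, 2, 0], [2, 0, 0, 0]), [4, 2, 3, 1, 2, 3, 4, 2, 3, 2], [0, -2, 2, 0],
        [1, -1, -1, -1]),
      (([0, 2, 2, 0], [2, 0, 0, 2]), [4, 3, 2, 3, 4, 2, 1], [0, -2, 2, 0], [0, 2, 2, 0]),
      (([1, -1, -1, -1], [0, -2, 0, 2]), [4], [1, -1, -1, -1], [0, -2, 2, 0]),
      (([1, -1, -1, -1], [0, -2, 2, 0]), [], [1, -1, -1, -1], [0, -2, 2, 0]),
      (([1, -1, -1, -1], [0, 0, -2, 2]), [3, 4], [1, -1, -1, -1], [0, -2, 2, 0]),
      (([1, -1, -1, -1], [2, 0, 0, 2]), [4, 2, 3, 1, 2, 3, 4, 1, 2], [1, -1, -1, -1],
        [0, -2, 2, 0]),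
      (([1, -1, -1, -1], [2, 0, 2, 0]), [2, 3, 1, 2, 3, 4, 1, 2], [1, -1, -1, -1],
        [0, -2, 2, 0]),
      (([1, -1, -1, -1], [2, 2, 0, 0]), [3, 2, 3, 1, 2, 3, 4, 1, 2], [1, -1, -1, -1],
        [0, -2, 2, 0]),
      (([1, -1, -1, 1], [0, -2, 2, 0]), [4, 3, 2, 3, 4], [1, -1, -1, -1], [0, -2, 2, 0]),
      (([1, -1, -1, 1], [0, 0, 2, 2]), [3, 4, 3, 2], [1, -1, -1, -1], [0, -2, 2, 0]),
      (([1, -1, -1, 1], [0, 2, 0, 2]), [4, 3, 2], [1, -1, -1, -1], [0, -2, 2, 0]),
      (([1, -1, -1, 1], [2, 0, 0, -2]), [4, 2, 3, 1, 2, 3, 4, 2], [1, -1, -1, -1],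
        [0, -2, 2, 0]),
      (([1, -1, -1, 1], [2, 0, 2, 0]), [3, 1, 2, 3, 4, 3, 1, 2], [1, -1, -1, -1],
        [0, -2, 2, 0]),
      (([1, -1, -1, 1], [2, 2, 0, 0]), [1, 2, 3, 4, 3, 1, 2], [1, -1, -1, -1], [0, -2, 2, 0]),
      (([1, -1, 1, -1], [0, -2, 0, 2]), [3, 2, 3, 4], [1, -1, -1, -1], [0, -2, 2, 0]),
      (([1, -1, 1, -1], [0, 0, 2, 2]), [3, 4, 2], [1, -1, -1, -1], [0, -2, 2, 0]),
      (([1, -1, 1, -1], [0, 2, 2, 0]), [3, 2], [1, -1, -1, -1], [0, -2, 2, 0]),
      (([1, -1, 1, -1], [2, 0, -2, 0]), [2, 3, 1, 2, 3, 4, 2], [1, -1, -1, -1],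
        [0, -2, 2, 0]),
      (([1, -1, 1, -1], [2, 0, 0, 2]), [4, 3, 1, 2, 3, 4, 3, 1, 2], [1, -1, -1, -1],
        [0, -2, 2, 0]),
      (([1, -1, 1, -1], [2, 2, 0, 0]), [1, 2, 3, 4, 1, 2], [1, -1, -1, -1], [0, -2, 2, 0]),
      (([1, -1, 1, 1], [0, 0, -2, 2]), [3, 4, 2, 3, 2], [1, -1, -1, -1], [0, -2, 2, 0]),
      (([1, -1, 1, 1], [0, 2, 0, 2]), [3, 2, 3, 4, 3, 2], [1, -1, -1, -1], [0, -2, 2, 0]),
      (([1, -1, 1, 1], [0, 2, 2, 0]), [4, 3, 2, 3, 4, 3, 2], [1, -1, -1, -1], [0, -2, 2, 0]),
      (([1, -1, 1, 1], [2, 0, -2, 0]), [3, 1, 2, 3, 4, 3, 2], [1, -1, -1, -1], [0, -2, 2, 0]),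
      (([1, -1, 1, 1], [2, 0, 0, -2]), [4, 3, 1, 2, 3, 4, 3, 2], [1, -1, -1, -1],
        [0, -2, 2, 0]),
      (([1, -1, 1, 1], [2, 2, 0, 0]), [3, 2, 3, 1, 2, 3, 4, 3, 1, 2], [1, -1, -1, -1],
        [0, -2, 2, 0]),
      (([1, 1, -1, -1], [0, 0, -2, 2]), [2, 3, 4], [1, -1, -1, -1], [0, -2, 2, 0]),
      (([1, 1, -1, -1], [0, 2, 0, 2]), [4, 2], [1, -1, -1, -1], [0, -2, 2, 0]),
      (([1, 1, -1, -1], [0, 2, 2, 0]), [2], [1, -1, -1, -1], [0, -2, 2, 0]),
      (([1, 1, -1, -1], [2, -2, 0, 0]), [3, 2, 3, 1, 2, 3, 4, 2], [1, -1, -1, -1],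
        [0, -2, 2, 0]),
      (([1, 1, -1, -1], [2, 0, 0, 2]), [4, 3, 1, 2, 3, 4, 1, 2], [1, -1, -1, -1],
        [0, -2, 2, 0]),
      (([1, 1, -1, -1], [2, 0, 2, 0]), [3, 1, 2, 3, 4, 1, 2], [1, -1, -1, -1], [0, -2, 2, 0]),
      (([1, 1, -1, 1], [0, -2, 0, 2]), [4, 2, 3, 2], [1, -1, -1, -1], [0, -2, 2, 0]),
      (([1, 1, -1, 1], [0, 0, 2, 2]), [2, 3, 4, 3, 2], [1, -1, -1, -1], [0, -2, 2, 0]),
      (([1, 1, -1, 1], [0, 2, 2, 0]), [4, 3, 2, 3, 4, 2], [1, -1, -1, -1], [0, -2, 2, 0]),
      (([1, 1, -1, 1], [2, -2, 0, 0]), [1, 2, 3, 4, 3, 2], [1, -1, -1, -1], [0, -2, 2, 0]),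
      (([1, 1, -1, 1], [2, 0, 0, -2]), [4, 3, 1, 2, 3, 4, 2], [1, -1, -1, -1], [0, -2, 2, 0]),
      (([1, 1, -1, 1], [2, 0, 2, 0]), [2, 3, 1, 2, 3, 4, 3, 1, 2], [1, -1, -1, -1],
        [0, -2, 2, 0]),
      (([1, 1, 1, -1], [0, -2, 2, 0]), [2, 3, 2], [1, -1, -1, -1], [0, -2, 2, 0]),
      (([1, 1, 1, -1], [0, 0, 2, 2]), [2, 3, 4, 2], [1, -1, -1, -1], [0, -2, 2, 0]),
      (([1, 1, 1, -1], [0, 2, 0, 2]), [3, 2, 3, 4, 2], [1, -1, -1, -1], [0, -2, 2, 0]),
      (([1, 1, 1, -1], [2, -2, 0, 0]), [1, 2, 3, 4, 2], [1, -1, -1, -1], [0, -2, 2, 0]),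
      (([1, 1, 1, -1], [2, 0, -2, 0]), [3, 1, 2, 3, 4, 2], [1, -1, -1, -1], [0, -2, 2, 0]),
      (([1, 1, 1, -1], [2, 0, 0, 2]), [4, 2, 3, 1, 2, 3, 4, 3, 1, 2], [1, -1, -1, -1],
        [0, -2, 2, 0]),
      (([1, 1, 1, 1], [0, -2, 0, 2]), [3, 2, 3, 4, 2, 3, 2], [1, -1, -1, -1], [0, -2, 2, 0]),
      (([1, 1, 1, 1], [0, -2, 2, 0]), [4, 3, 2, 3, 4, 2, 3, 2], [1, -1, -1, -1],
        [0, -2, 2, 0]),
      (([1, 1, 1, 1], [0, 0, -2, 2]), [2, 3, 4, 2, 3, 2], [1, -1, -1, -1], [0, -2, 2, 0]),
      (([1, 1, 1, 1], [2, -2, 0, 0]), [3, 2, 3, 1, 2, 3, 4, 3, 2], [1, -1, -1, -1],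
        [0, -2, 2, 0]),
      (([1, 1, 1, 1], [2, 0, -2, 0]), [2, 3, 1, 2, 3, 4, 3, 2], [1, -1, -1, -1],
        [0, -2, 2, 0]),
      (([1, 1, 1, 1], [2, 0, 0, -2]), [4, 2, 3, 1, 2, 3, 4, 3, 2], [1, -1, -1, -1],
        [0, -2, 2, 0]),
      (([2, -2, 0, 0], [0, 0, -2, 2]), [3, 4, 1], [0, 2, 2, 0], [0, -2, 2, 0]),
      (([2, -2, 0, 0], [0, 0, 0, 2]), [3, 4, 3, 1, 2], [0, -2, 2, 0], [1, -1, -1, -1]),
      (([2, -2, 0, 0], [0, 0, 2, 0]), [3, 4, 1, 2], [0, -2, 2, 0], [1, -1, -1, -1]),
      (([2, -2, 0, 0], [0, 0, 2, 2]), [3, 4, 2, 1], [0, 2, 2, 0], [0, -2, 2, 0]),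
      (([2, -2, 0, 0], [1, 1, -1, -1]), [3, 2, 3, 1, 2, 3, 4, 2], [0, -2, 2, 0],
        [1, -1, -1, -1]),
      (([2, -2, 0, 0], [1, 1, -1, 1]), [1, 2, 3, 4, 3, 2], [0, -2, 2, 0], [1, -1, -1, -1]),
      (([2, -2, 0, 0], [1, 1, 1, -1]), [1, 2, 3, 4, 2], [0, -2, 2, 0], [1, -1, -1, -1]),
      (([2, -2, 0, 0], [1, 1, 1, 1]), [3, 2, 3, 1, 2, 3, 4, 3, 2], [0, -2, 2, 0],
        [1, -1, -1, -1]),
      (([2, -2, 0, 0], [2, 2, 0, 0]), [1, 2, 3, 4, 2, 1], [0, -2, 2, 0], [0, 2, 2, 0]),
      (([2, 0, -2, 0], [0, -2, 0, 2]), [4, 1], [0, 2, 2, 0], [0, -2, 2, 0]),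
      (([2, 0, -2, 0], [0, 0, 0, 2]), [4, 3, 1, 2], [0, -2, 2, 0], [1, -1, -1, -1]),
      (([2, 0, -2, 0], [0, 2, 0, 0]), [4, 1, 2], [0, -2, 2, 0], [1, -1, -1, -1]),
      (([2, 0, -2, 0], [0, 2, 0, 2]), [4, 2, 1], [0, 2, 2, 0], [0, -2, 2, 0]),
      (([2, 0, -2, 0], [1, -1, 1, -1]), [2, 3, 1, 2, 3, 4, 2], [0, -2, 2, 0],
        [1, -1, -1, -1]),
      (([2, 0, -2, 0], [1, -1, 1, 1]), [3, 1, 2, 3, 4, 3, 2], [0, -2, 2, 0], [1, -1, -1, -1]),
      (([2, 0, -2, 0], [1, 1, 1, -1]), [3, 1, 2, 3, 4, 2], [0, -2, 2, 0], [1, -1, -1, -1]),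
      (([2, 0, -2, 0], [1, 1, 1, 1]), [2, 3, 1, 2, 3, 4, 3, 2], [0, -2, 2, 0],
        [1, -1, -1, -1]),
      (([2, 0, -2, 0], [2, 0, 2, 0]), [3, 1, 2, 3, 4, 2, 1], [0, -2, 2, 0], [0, 2, 2, 0]),
      (([2, 0, 0, -2], [0, -2, 2, 0]), [1], [0, 2, 2, 0], [0, -2, 2, 0]),
      (([2, 0, 0, -2], [0, 0, 2, 0]), [3, 1, 2], [0, -2, 2, 0], [1, -1, -1, -1]),
      (([2, 0, 0, -2], [0, 2, 0, 0]), [1, 2], [0, -2, 2, 0], [1, -1, -1, -1]),
      (([2, 0, 0, -2], [0, 2, 2, 0]), [2, 1], [0, 2, 2, 0], [0, -2, 2, 0]),
      (([2, 0, 0, -2], [1, -1, -1, 1]), [4, 2, 3, 1, 2, 3, 4, 2], [0, -2, 2, 0],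
        [1, -1, -1, -1]),
      (([2, 0, 0, -2], [1, -1, 1, 1]), [4, 3, 1, 2, 3, 4, 3, 2], [0, -2, 2, 0],
        [1, -1, -1, -1]),
      (([2, 0, 0, -2], [1, 1, -1, 1]), [4, 3, 1, 2, 3, 4, 2], [0, -2, 2, 0], [1, -1, -1, -1]),
      (([2, 0, 0, -2], [1, 1, 1, 1]), [4, 2, 3, 1, 2, 3, 4, 3, 2], [0, -2, 2, 0],
        [1, -1, -1, -1]),
      (([2, 0, 0, -2], [2, 0, 0, 2]), [4, 3, 1, 2, 3, 4, 2, 1], [0, -2, 2, 0], [0, 2, 2, 0]),
      (([2, 0, 0, 0], [0, -2, 0, 2]), [3, 1, 2, 3, 4, 2, 3, 2], [1, -1, -1, -1],
        [0, -2, 2, 0]),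
      (([2, 0, 0, 0], [0, -2, 2, 0]), [4, 3, 1, 2, 3, 4, 2, 3, 2], [1, -1, -1, -1],
        [0, -2, 2, 0]),
      (([2, 0, 0, 0], [0, 0, -2, 2]), [1, 2, 3, 4, 2, 3, 2], [1, -1, -1, -1], [0, -2, 2, 0]),
      (([2, 0, 0, 0], [0, 0, 2, 2]), [3, 2, 3, 1, 2, 3, 4, 2, 3, 2], [1, -1, -1, -1],
        [0, -2, 2, 0]),
      (([2, 0, 0, 0], [0, 2, 0, 2]), [2, 3, 1, 2, 3, 4, 2, 3, 2], [1, -1, -1, -1],
        [0, -2, 2, 0]),
      (([2, 0, 0, 0], [0, 2, 2, 0]), [4, 2, 3, 1, 2, 3, 4, 2, 3, 2], [1, -1, -1, -1],
        [0, -2, 2, 0]),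
      (([2, 0, 0, 2], [0, -2, 2, 0]), [4, 3, 2, 3, 4, 1], [0, 2, 2, 0], [0, -2, 2, 0]),
      (([2, 0, 0, 2], [0, 0, 2, 0]), [4, 3, 2, 3, 4, 3, 1, 2], [0, -2, 2, 0],
        [1, -1, -1, -1]),
      (([2, 0, 0, 2], [0, 2, 0, 0]), [4, 3, 2, 3, 4, 1, 2], [0, -2, 2, 0], [1, -1, -1, -1]),
      (([2, 0, 0, 2], [0, 2, 2, 0]), [4, 3, 2, 3, 4, 2, 1], [0, 2, 2, 0], [0, -2, 2, 0]),
      (([2, 0, 0, 2], [1, -1, -1, -1]), [4, 2, 3, 1, 2, 3, 4, 1, 2], [0, -2, 2, 0],
        [1, -1, -1, -1]),
      (([2, 0, 0, 2], [1, -1, 1, -1]), [4, 3, 1, 2, 3, 4, 3, 1, 2], [0, -2, 2, 0],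
        [1, -1, -1, -1]),
      (([2, 0, 0, 2], [1, 1, -1, -1]), [4, 3, 1, 2, 3, 4, 1, 2], [0, -2, 2, 0],
        [1, -1, -1, -1]),
      (([2, 0, 0, 2], [1, 1, 1, -1]), [4, 2, 3, 1, 2, 3, 4, 3, 1, 2], [0, -2, 2, 0],
        [1, -1, -1, -1]),
      (([2, 0, 0, 2], [2, 0, 0, -2]), [4, 3, 1, 2, 3, 4, 2, 1], [0, 2, 2, 0], [0, -2, 2, 0]),
      (([2, 0, 2, 0], [0, -2, 0, 2]), [3, 2, 3, 4, 1], [0, 2, 2, 0], [0, -2, 2, 0]),
      (([2, 0, 2, 0], [0, 0, 0, 2]), [3, 2, 3, 4, 3, 1, 2], [0, -2, 2, 0], [1, -1, -1, -1]),
      (([2, 0, 2, 0], [0, 2, 0, 0]), [3, 2, 3, 4, 1, 2], [0, -2, 2, 0], [1, -1, -1, -1]),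
      (([2, 0, 2, 0], [0, 2, 0, 2]), [3, 2, 3, 4, 2, 1], [0, 2, 2, 0], [0, -2, 2, 0]),
      (([2, 0, 2, 0], [1, -1, -1, -1]), [2, 3, 1, 2, 3, 4, 1, 2], [0, -2, 2, 0],
        [1, -1, -1, -1]),
      (([2, 0, 2, 0], [1, -1, -1, 1]), [3, 1, 2, 3, 4, 3, 1, 2], [0, -2, 2, 0],
        [1, -1, -1, -1]),
      (([2, 0, 2, 0], [1, 1, -1, -1]), [3, 1, 2, 3, 4, 1, 2], [0, -2, 2, 0], [1, -1, -1, -1]),
      (([2, 0, 2, 0], [1, 1, -1, 1]), [2, 3, 1, 2, 3, 4, 3, 1, 2], [0, -2, 2, 0],
        [1, -1, -1, -1]),
      (([2, 0, 2, 0], [2, 0, -2, 0]), [3, 1, 2, 3, 4, 2, 1], [0, 2, 2, 0], [0, -2, 2, 0]),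
      (([2, 2, 0, 0], [0, 0, -2, 2]), [2, 3, 4, 1], [0, 2, 2, 0], [0, -2, 2, 0]),
      (([2, 2, 0, 0], [0, 0, 0, 2]), [2, 3, 4, 3, 1, 2], [0, -2, 2, 0], [1, -1, -1, -1]),
      (([2, 2, 0, 0], [0, 0, 2, 0]), [2, 3, 4, 1, 2], [0, -2, 2, 0], [1, -1, -1, -1]),
      (([2, 2, 0, 0], [0, 0, 2, 2]), [2, 3, 4, 2, 1], [0, 2, 2, 0], [0, -2, 2, 0]),
      (([2, 2, 0, 0], [1, -1, -1, -1]), [3, 2, 3, 1, 2, 3, 4, 1, 2], [0, -2, 2, 0],
        [1, -1, -1, -1]),
      (([2, 2, 0, 0], [1, -1, -1, 1]), [1, 2, 3, 4, 3, 1, 2], [0, -2, 2, 0], [1, -1, -1, -1]),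
      (([2, 2, 0, 0], [1, -1, 1, -1]), [1, 2, 3, 4, 1, 2], [0, -2, 2, 0], [1, -1, -1, -1]),
      (([2, 2, 0, 0], [1, -1, 1, 1]), [3, 2, 3, 1, 2, 3, 4, 3, 1, 2], [0, -2, 2, 0],
        [1, -1, -1, -1]),
      (([2, 2, 0, 0], [2, -2, 0, 0]), [1, 2, 3, 4, 2, 1], [0, 2, 2, 0], [0, -2, 2, 0])]"

lemma orbit_table_correct:
  "\<forall>((t1, t2), w, a, b) \<in> set orbit_table. set w \<subseteq> {1, 2, 3, 4}
     \<and> ((a, b) \<in> set orbit_reps \<or> (b, a) \<in> set orbit_reps) \<and> a \<in> set F4_roots \<and> b \<in> set F4_roots
     \<and> pos_coords (wact_coords w a) = t1 \<and> pos_coords (wact_coords w b) = t2"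
  by code_simp

lemma orbit_table_complete:
  "map fst orbit_table = [(t1, t2) \<leftarrow> List.product F4_pos_roots F4_pos_roots.
     dot_coords t1 t2 = 0 \<and> \<not> (is_short t1 \<and> is_short t2)]"
  by code_simp

lemma e_root_pos_coords:
  assumes "pos_coords t \<in> set F4_pos_roots"
  shows "e_root r e (pos_coords t) = e_root r e t"
  using assms by (auto simp: e_root_def root_word_def pos_coords_def)

lemma e_roots_commute:
  assumes "BrF4_rels d r e" and "t1 \<in> set F4_pos_roots" and "t2 \<in> set F4_pos_roots"
    and "dot_coords t1 t2 = 0" and "\<not> (is_short t1 \<and> is_short t2)"
  shows "e_root r e t1 * e_root r e t2 = e_root r e t2 * e_root r e t1"
proof -
  have "(t1, t2) \<in> set (map fst orbit_table)"
    unfolding orbit_table_complete using assms(2-5) by auto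
  then obtain w a b where "((t1, t2), w, a, b) \<in> set orbit_table"
    by auto
  with orbit_table_correct have w: "set w \<subseteq> {1..4}"
    and ab: "(a, b) \<in> set orbit_reps \<or> (b, a) \<in> set orbit_reps"
    and roots: "a \<in> set F4_roots" "b \<in> set F4_roots"
    and t1: "pos_coords (wact_coords w a) = t1" and t2: "pos_coords (wact_coords w b) = t2"
    by (fastforce simp: atLeastAtMost_1_4)+
  have "rword r (rev w) * rword r w = 1"
    using assms(1) w by (intro rword_rev_mult_rword) (auto simp: BrF4_rels_def)
  moreover have "e_root r e t1 = e_root r e (wact_coords w a)"
    and "e_root r e t2 = e_root r e (wact_coords w b)"
    using e_root_pos_coords assms(2,3) t1 t2 by metis+
  ultimately show ?thesis
    using conj_commute e_root_orbit_reps_commute[OF assms(1) ab]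
    by (simp add: e_root_wact_coords[OF assms(1) w roots(1)]
        e_root_wact_coords[OF assms(1) w roots(2)])
qed

section \<open>Orthogonal short roots are not admissible\<close>

definition E6_vec :: "int list \<Rightarrow> nat \<Rightarrow> int" where
  "E6_vec cs n = (if 1 \<le> n \<and> n \<le> 6 then cs!(n - 1) else 0)"

definition E6_form :: "(nat \<Rightarrow> int) \<Rightarrow> (nat \<Rightarrow> int) \<Rightarrow> int" where
  "E6_form x y = 2 * (x 1 * y 1 + x 2 * y 2 + x 3 * y 3 + x 4 * y 4 + x 5 * y 5 + x 6 * y 6)
     - (x 1 * y 3 + x 3 * y 1 + x 3 * y 4 + x 4 * y 3 + x 4 * y 5 + x 5 * y 4 + x 5 * y 6
        + x 6 * y 5 + x 2 * y 4 + x 4 * y 2)"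

lemma atLeastAtMost_1_6: "{1..6::nat} = {1, 2, 3, 4, 5, 6}"
  by auto

lemma formE6_eq_E6_form: "formE6 x y = E6_form x y"
  unfolding formE6_def E6_form_def atLeastAtMost_1_6
  by (simp add: cartanE6_def doubleton_eq_iff algebra_simps)

definition E6_simple :: "nat \<Rightarrow> int list" where
  "E6_simple i = map (\<lambda>n. if n + 1 = i then 1 else 0) [0..<6]"

definition E6_refl :: "nat \<Rightarrow> int list \<Rightarrow> int list" where
  "E6_refl i cs =
     map (\<lambda>n. cs!n - (if n + 1 = i then E6_form (E6_vec cs) (alphaE6 i) else 0)) [0..<6]"

definition E6_root :: "nat list \<Rightarrow> nat \<Rightarrow> int list" where
  "E6_root ws i = foldr E6_refl ws (E6_simple i)"

lemma E6_root_in_PhiE6: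
  assumes "i \<in> {1..6}" and "set ws \<subseteq> {1..6}"
  shows "E6_vec (E6_root ws i) \<in> PhiE6"
  using assms(2) unfolding E6_root_def
proof (induction ws)
  case Nil
  have "E6_vec (E6_simple i) = alphaE6 i"
    using assms(1) by (auto simp: fun_eq_iff E6_vec_def E6_simple_def alphaE6_def)
  with assms(1) show ?case
    by (simp add: PhiE6.simple)
next
  case (Cons j ws)
  then have j: "j \<in> {1..6}" and "E6_vec (foldr E6_refl ws (E6_simple i)) \<in> PhiE6"
    by auto
  moreover have "reflE6 j (E6_vec cs) = E6_vec (E6_refl j cs)" for cs
    using j
    by (auto simp: fun_eq_iff E6_vec_def E6_refl_def reflE6_def alphaE6_def formE6_eq_E6_form)
  ultimately show ?case
    using PhiE6.refl by fastforce
qed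

definition proj_coords :: "int list \<Rightarrow> int list" where
  "proj_coords cs = [cs!0 + cs!5, - (cs!0 + cs!5) + 2 * (cs!2 + cs!4) - 2 * cs!3,
     - (cs!0 + cs!5) + 2 * cs!3 - 2 * cs!1, - (cs!0 + cs!5) + 2 * cs!1]"

lemma pE6_E6_vec: "pE6 (E6_vec cs) = vec_of_coords (proj_coords cs)"
  unfolding pE6_def atLeastAtMost_1_6
  by (simp add: E6_vec_def palpha_def beta_eq_vec_of_coords simple_root_coords_def proj_coords_def
      vec_eq_iff forall_4 field_simps)

definition positive_lift :: "nat list \<Rightarrow> nat \<Rightarrow> int list \<Rightarrow> bool" where
  "positive_lift ws i t \<longleftrightarrow> i \<in> {1, 2, 3, 4, 5, 6} \<and> set ws \<subseteq> {1, 2, 3, 4, 5, 6}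
     \<and> length (E6_root ws i) = 6 \<and> list_all (\<lambda>c. c \<ge> 0) (E6_root ws i)
     \<and> proj_coords (E6_root ws i) = t"

lemma positive_lift_mem:
  assumes "positive_lift ws i t" and "vec_of_coords t \<in> X"
  shows "E6_vec (E6_root ws i) \<in> {x \<in> PhiE6_pos. pE6 x \<in> X}"
proof -
  have "E6_vec (E6_root ws i) \<in> PhiE6"
    using assms(1) unfolding positive_lift_def
    by (intro E6_root_in_PhiE6) (auto simp: atLeastAtMost_1_6)
  with assms show ?thesis
    by (auto simp: positive_lift_def PhiE6_pos_def E6_vec_def list_all_iff pE6_E6_vec)
qed

definition lift_table :: "((int list \<times> int list) \<times> (nat list \<times> nat) \<times> (nat list \<times> nat)) list" where
  "lift_table = [(([0, 0, 0, 2], [0, 0, 2, 0]), ([5, 4], 2), ([5], 4)),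
      (([0, 0, 0, 2], [0, 2, 0, 0]), ([5, 4], 2), ([], 5)),
      (([0, 0, 0, 2], [2, 0, 0, 0]), ([5, 4], 2), ([5, 6, 4, 5, 2, 4, 3], 1)),
      (([0, 0, 2, 0], [0, 0, 0, 2]), ([5], 4), ([5, 4], 2)),
      (([0, 0, 2, 0], [0, 2, 0, 0]), ([5], 4), ([], 5)),
      (([0, 0, 2, 0], [2, 0, 0, 0]), ([5], 4), ([5, 6, 4, 5, 2, 4, 3], 1)),
      (([0, 2, 0, 0], [0, 0, 0, 2]), ([], 5), ([5, 4], 2)),
      (([0, 2, 0, 0], [0, 0, 2, 0]), ([], 5), ([5], 4)),
      (([0, 2, 0, 0], [2, 0, 0, 0]), ([], 5), ([5, 6, 4, 5, 2, 4, 3], 1)),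
      (([1, -1, -1, -1], [1, -1, 1, 1]), ([], 6), ([6, 4, 5, 3, 4], 2)),
      (([1, -1, -1, -1], [1, 1, -1, 1]), ([], 6), ([6, 5, 3, 4], 2)),
      (([1, -1, -1, -1], [1, 1, 1, -1]), ([], 6), ([6, 5, 4], 3)),
      (([1, -1, -1, 1], [1, -1, 1, -1]), ([6, 5, 4], 2), ([6, 5], 4)),
      (([1, -1, -1, 1], [1, 1, -1, -1]), ([6, 5, 4], 2), ([6], 5)),
      (([1, -1, -1, 1], [1, 1, 1, 1]), ([6, 5, 4], 2), ([5, 6, 4, 5, 3, 4], 2)),
      (([1, -1, 1, -1], [1, -1, -1, 1]), ([6, 5], 4), ([6, 5, 4], 2)),
      (([1, -1, 1, -1], [1, 1, -1, -1]), ([6, 5], 4), ([6], 5)),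
      (([1, -1, 1, -1], [1, 1, 1, 1]), ([6, 5], 4), ([5, 6, 4, 5, 3, 4], 2)),
      (([1, -1, 1, 1], [1, -1, -1, -1]), ([6, 4, 5, 3, 4], 2), ([], 6)),
      (([1, -1, 1, 1], [1, 1, -1, 1]), ([6, 4, 5, 3, 4], 2), ([6, 5, 3, 4], 2)),
      (([1, -1, 1, 1], [1, 1, 1, -1]), ([6, 4, 5, 3, 4], 2), ([6, 5, 4], 3)),
      (([1, 1, -1, -1], [1, -1, -1, 1]), ([6], 5), ([6, 5, 4], 2)),
      (([1, 1, -1, -1], [1, -1, 1, -1]), ([6], 5), ([6, 5], 4)),
      (([1, 1, -1, -1], [1, 1, 1, 1]), ([6], 5), ([5, 6, 4, 5, 3, 4], 2)),
      (([1, 1, -1, 1], [1, -1, -1, -1]), ([6, 5, 3, 4], 2), ([], 6)),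
      (([1, 1, -1, 1], [1, -1, 1, 1]), ([6, 5, 3, 4], 2), ([6, 4, 5, 3, 4], 2)),
      (([1, 1, -1, 1], [1, 1, 1, -1]), ([6, 5, 3, 4], 2), ([6, 5, 4], 3)),
      (([1, 1, 1, -1], [1, -1, -1, -1]), ([6, 5, 4], 3), ([], 6)),
      (([1, 1, 1, -1], [1, -1, 1, 1]), ([6, 5, 4], 3), ([6, 4, 5, 3, 4], 2)),
      (([1, 1, 1, -1], [1, 1, -1, 1]), ([6, 5, 4], 3), ([6, 5, 3, 4], 2)),
      (([1, 1, 1, 1], [1, -1, -1, 1]), ([5, 6, 4, 5, 3, 4], 2), ([6, 5, 4], 2)),
      (([1, 1, 1, 1], [1, -1, 1, -1]), ([5, 6, 4, 5, 3, 4], 2), ([6, 5], 4)),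
      (([1, 1, 1, 1], [1, 1, -1, -1]), ([5, 6, 4, 5, 3, 4], 2), ([6], 5)),
      (([2, 0, 0, 0], [0, 0, 0, 2]), ([5, 6, 4, 5, 2, 4, 3], 1), ([5, 4], 2)),
      (([2, 0, 0, 0], [0, 0, 2, 0]), ([5, 6, 4, 5, 2, 4, 3], 1), ([5], 4)),
      (([2, 0, 0, 0], [0, 2, 0, 0]), ([5, 6, 4, 5, 2, 4, 3], 1), ([], 5))]"

lemma lift_table_correct:
  "\<forall>((t1, t2), (wx, ix), (wy, iy)) \<in> set lift_table. positive_lift wx ix t1 \<and> positive_lift wy iy t2
     \<and> E6_form (E6_vec (E6_root wx ix)) (E6_vec (E6_root wy iy)) \<noteq> 0"
  by code_simp

lemma lift_table_complete:
  "map fst lift_table = [(t1, t2) \<leftarrow> List.product F4_pos_roots F4_pos_roots.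
     dot_coords t1 t2 = 0 \<and> is_short t1 \<and> is_short t2]"
  by code_simp

lemma orthogonal_short_roots_not_admissible:
  assumes "t1 \<in> set F4_pos_roots" and "t2 \<in> set F4_pos_roots" and "dot_coords t1 t2 = 0"
    and "is_short t1" and "is_short t2"
    and "admissibleF4 X" and "vec_of_coords t1 \<in> X" and "vec_of_coords t2 \<in> X"
  shows False
proof -
  have "(t1, t2) \<in> set (map fst lift_table)"
    unfolding lift_table_complete using assms(1-5) by auto
  then obtain wx ix wy iy where "((t1, t2), (wx, ix), (wy, iy)) \<in> set lift_table"
    by auto
  with lift_table_correct have x: "positive_lift wx ix t1" and y: "positive_lift wy iy t2"
    and form: "E6_form (E6_vec (E6_root wx ix)) (E6_vec (E6_root wy iy)) \<noteq> 0"
    by fastforce+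
  have "E6_vec (E6_root wx ix) \<noteq> E6_vec (E6_root wy iy)"
  proof
    assume "E6_vec (E6_root wx ix) = E6_vec (E6_root wy iy)"
    then have "vec_of_coords t1 = vec_of_coords t2"
      using x y unfolding positive_lift_def by (metis pE6_E6_vec)
    with assms(3,4) show False
      unfolding vec_of_coords_eq_iff is_short_def dot_coords_def by simp
  qed
  moreover have "admissibleE6 {x \<in> PhiE6_pos. pE6 x \<in> X}"
    using assms(6) unfolding admissibleF4_def by blast
  ultimately show False
    using positive_lift_mem[OF x assms(7)] positive_lift_mem[OF y assms(8)] form
    unfolding admissibleE6_def formE6_eq_E6_form by blast
qed

theorem lemma3p4:
  fixes g1 g2 :: "real^4"
  assumes "g1 \<in> PsiF4_pos" and "g2 \<in> PsiF4_pos" and "g1 \<bullet> g2 = 0"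
    and "\<exists>X. admissibleF4 X \<and> {g1, g2} \<subseteq> X"
  shows "\<forall>(d::'a::ring_1) r e. central_unit d \<and> BrF4_rels d r e \<longrightarrow>
           (\<forall>w1 w2 i j. set w1 \<subseteq> {1..4} \<and> set w2 \<subseteq> {1..4} \<and> i \<in> {1..4} \<and> j \<in> {1..4}
              \<and> wact w1 (beta i) = g1 \<and> wact w2 (beta j) = g2
              \<longrightarrow> ebeta r e w1 i * ebeta r e w2 j = ebeta r e w2 j * ebeta r e w1 i)"
proof (intro allI impI, elim conjE)
  fix d :: 'a and r e w1 w2 i j
  assume rels: "BrF4_rels d r e" and w1: "set w1 \<subseteq> {1..4}" and w2: "set w2 \<subseteq> {1..4}"
    and i: "i \<in> {1..4}" and j: "j \<in> {1..4}"
    and g1: "wact w1 (beta i) = g1" and g2: "wact w2 (beta j) = g2"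
  define t1 where "t1 = wact_coords w1 (simple_root_coords i)"
  define t2 where "t2 = wact_coords w2 (simple_root_coords j)"
  have roots: "t1 \<in> set F4_roots" "t2 \<in> set F4_roots"
    using wact_coords_in_F4_roots simple_roots_in_F4_roots w1 w2 i j
    unfolding t1_def t2_def atLeastAtMost_1_4 by auto
  have vec: "g1 = vec_of_coords t1" "g2 = vec_of_coords t2"
    using g1 g2 wact_vec_of_coords w1 w2 simple_roots_in_F4_roots i j
    unfolding t1_def t2_def beta_eq_vec_of_coords atLeastAtMost_1_4 by auto
  have pos: "t1 \<in> set F4_pos_roots" "t2 \<in> set F4_pos_roots"
    using in_F4_pos_roots roots assms(1,2) vec by auto
  have orth: "dot_coords t1 t2 = 0"
    using assms(3) vec by (simp add: inner_vec_of_coords)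
  have "\<not> (is_short t1 \<and> is_short t2)"
    using orthogonal_short_roots_not_admissible[OF pos orth] assms(4) vec by auto
  with e_roots_commute[OF rels pos orth]
  show "ebeta r e w1 i * ebeta r e w2 j = ebeta r e w2 j * ebeta r e w1 i"
    by (simp add: ebeta_eq_e_root[OF rels w1 i] ebeta_eq_e_root[OF rels w2 j] t1_def t2_def)
qed

end
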